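(* Let $(R,\mathfrak{m})$ be a Noetherian local ring and let $I$ be an ideal of $R$. Let $x_1,\ldots,x_s,y$ be a minimal generating set of $I$, where $J=(x_1,\ldots,x_s)$ is a reduction of $I$ with reduction number $r=\mathrm{r}_J(I)$. Assume that (a) $x_1,\ldots,x_s$ is a $d$-sequence, and (b) $(x_1,\ldots,x_i)\cap I^{r+1}=(x_1,\ldots,x_i)I^r$ for all $i=1,\ldots,s-1$. Then $\mathrm{rt}(I)\leq \mathrm{r}_J(I)+1$. Suppose in addition that (c) $x_1,\ldots,x_s$ is an $R$-sequence and (d) $(x_1,\ldots,x_i)\cap I^{r}=(x_1,\ldots,x_i)I^{r-1}$ for all $i=1,\ldots,s-1$. Then $\mathrm{rt}(I)=\mathrm{r}_J(I)+1$ and there is a form $Y^{r+1}-\sum_{i=1}^s X_iF_i\in Q_{r+1}$, with $F_i\in V_r$, such that $Q=(Y^{r+1}-\sum_iX_iF_i)+Q\langle r\rangle$.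
   Context: $J\subseteq I$ is a reduction of $I$ if $I^{m+1}=JI^m$ for some $m\ge0$; $\mathrm{r}_J(I)$ is the least such $m$; $I^0=R$. With $J_0=0$, $J_i=(x_1,\ldots,x_i)$, the sequence $x_1,\ldots,x_s$ is a $d$-sequence if $(J_i:x_{i+1}x_j)=(J_i:x_j)$ for all $0\leq i\leq s-1$, $j\geq i+1$. $V=R[X_1,\ldots,X_s,Y]$ graded by total degree, $V_n$ its degree-$n$ part; $\varphi:V\to\mathbf{R}(I)=\bigoplus_{n\ge0}I^nt^n$ sends $X_i\mapsto x_it$, $Y\mapsto yt$; $Q=\ker\varphi=\bigoplus_{n\ge1}Q_n$; $Q\langle n\rangle$ is the ideal generated by homogeneous elements of $Q$ of degree at most $n$; $\mathrm{rt}(I)$ is the least $N\ge1$ with $Q=Q\langle N\rangle$. *)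

theory Defs
  imports "HOL-Library.Poly_Mapping" "HOL-Computational_Algebra.Polynomial"
begin

definition ideal_in :: "'a::comm_ring_1 set \<Rightarrow> 'a set \<Rightarrow> bool" where
  "ideal_in C A \<longleftrightarrow> A \<subseteq> C \<and> 0 \<in> A \<and> (\<forall>a\<in>A. \<forall>b\<in>A. a + b \<in> A)
     \<and> (\<forall>c\<in>C. \<forall>a\<in>A. c * a \<in> A)"

definition gen_in :: "'a::comm_ring_1 set \<Rightarrow> 'a set \<Rightarrow> 'a set" where
  "gen_in C S = \<Inter>{A. ideal_in C A \<and> S \<subseteq> A}"

abbreviation ideal :: "'a::comm_ring_1 set \<Rightarrow> bool" where
  "ideal A \<equiv> ideal_in UNIV A"

abbreviation gen :: "'a::comm_ring_1 set \<Rightarrow> 'a set" where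
  "gen S \<equiv> gen_in UNIV S"

definition ideal_mult :: "'a::comm_ring_1 set \<Rightarrow> 'a set \<Rightarrow> 'a set" where
  "ideal_mult A B = gen {a * b | a b. a \<in> A \<and> b \<in> B}"

fun ideal_pow :: "'a::comm_ring_1 set \<Rightarrow> nat \<Rightarrow> 'a set" where
  "ideal_pow A 0 = UNIV"
| "ideal_pow A (Suc n) = ideal_mult A (ideal_pow A n)"

definition colon :: "'a::comm_ring_1 set \<Rightarrow> 'a \<Rightarrow> 'a set" where
  "colon A a = {z. z * a \<in> A}"

definition noetherian_ring :: "'a::comm_ring_1 itself \<Rightarrow> bool" where
  "noetherian_ring _ \<longleftrightarrow> (\<forall>A::'a set. ideal A \<longrightarrow> (\<exists>F. finite F \<and> A = gen F))"

definition local_ring :: "'a::comm_ring_1 set \<Rightarrow> bool" where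
  "local_ring m \<longleftrightarrow> ideal m \<and> m \<noteq> UNIV \<and> (\<forall>A. ideal A \<and> A \<noteq> UNIV \<longrightarrow> A \<subseteq> m)"

definition mu :: "'a::comm_ring_1 set \<Rightarrow> nat" where
  "mu A = (LEAST n. \<exists>g::nat \<Rightarrow> 'a. A = gen (g ` {..<n}))"

definition is_reduction :: "'a::comm_ring_1 set \<Rightarrow> 'a set \<Rightarrow> bool" where
  "is_reduction J I \<longleftrightarrow> J \<subseteq> I \<and> (\<exists>m. ideal_pow I (Suc m) = ideal_mult J (ideal_pow I m))"

definition red_num :: "'a::comm_ring_1 set \<Rightarrow> 'a set \<Rightarrow> nat" where
  "red_num J I = (LEAST m. ideal_pow I (Suc m) = ideal_mult J (ideal_pow I m))"

definition Jseq :: "(nat \<Rightarrow> 'a::comm_ring_1) \<Rightarrow> nat \<Rightarrow> 'a set" where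
  "Jseq x i = gen (x ` {1..i})"

definition d_sequence :: "(nat \<Rightarrow> 'a::comm_ring_1) \<Rightarrow> nat \<Rightarrow> bool" where
  "d_sequence x s \<longleftrightarrow> (\<forall>i j. i \<le> s - 1 \<and> i + 1 \<le> j \<and> j \<le> s \<longrightarrow>
       colon (Jseq x i) (x (i+1) * x j) = colon (Jseq x i) (x j))"

definition R_sequence :: "(nat \<Rightarrow> 'a::comm_ring_1) \<Rightarrow> nat \<Rightarrow> bool" where
  "R_sequence x s \<longleftrightarrow> (\<forall>i\<in>{1..s}. \<forall>z. z * x i \<in> Jseq x (i - 1) \<longrightarrow> z \<in> Jseq x (i - 1))
     \<and> Jseq x s \<noteq> UNIV"

text \<open>Multivariate polynomials: finitely supported maps from monomials (exponent vectors
  finitely supported nat-to-nat maps) to coefficients. Variable 0 is Y, variable i (1 \<le> i \<le> s) is X_i.\<close>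
type_synonym 'a mpoly = "(nat \<Rightarrow>\<^sub>0 nat) \<Rightarrow>\<^sub>0 'a"

definition Vset :: "nat \<Rightarrow> 'a::comm_ring_1 mpoly set" where
  "Vset s = {F. \<forall>m\<in>Poly_Mapping.keys F. Poly_Mapping.keys m \<subseteq> {0..s}}"

definition mdeg :: "(nat \<Rightarrow>\<^sub>0 nat) \<Rightarrow> nat" where
  "mdeg m = (\<Sum>i\<in>Poly_Mapping.keys m. Poly_Mapping.lookup m i)"

definition homogeneous :: "nat \<Rightarrow> 'a::comm_ring_1 mpoly \<Rightarrow> bool" where
  "homogeneous n F \<longleftrightarrow> (\<forall>m\<in>Poly_Mapping.keys F. mdeg m = n)"

definition Vdeg :: "nat \<Rightarrow> nat \<Rightarrow> 'a::comm_ring_1 mpoly set" where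
  "Vdeg s n = {F \<in> Vset s. homogeneous n F}"

definition var :: "nat \<Rightarrow> 'a::comm_ring_1 mpoly" where
  "var i = Poly_Mapping.single (Poly_Mapping.single i 1) 1"

abbreviation Yv :: "'a::comm_ring_1 mpoly" where "Yv \<equiv> var 0"
abbreviation Xv :: "nat \<Rightarrow> 'a::comm_ring_1 mpoly" where "Xv i \<equiv> var i"

text \<open>phi from V to R(I), inside R[t], X_i to x_i t, Y to y t.\<close>
definition rees_map :: "(nat \<Rightarrow> 'a::comm_ring_1) \<Rightarrow> 'a \<Rightarrow> 'a mpoly \<Rightarrow> 'a poly" where
  "rees_map x y F = (\<Sum>m\<in>Poly_Mapping.keys F. [:Poly_Mapping.lookup F m:] *
      (\<Prod>i\<in>Poly_Mapping.keys m. (if i = 0 then [:0, y:] else [:0, x i:]) ^ Poly_Mapping.lookup m i))"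

definition Qker :: "(nat \<Rightarrow> 'a::comm_ring_1) \<Rightarrow> 'a \<Rightarrow> nat \<Rightarrow> 'a mpoly set" where
  "Qker x y s = {F \<in> Vset s. rees_map x y F = 0}"

definition Qdeg :: "(nat \<Rightarrow> 'a::comm_ring_1) \<Rightarrow> 'a \<Rightarrow> nat \<Rightarrow> nat \<Rightarrow> 'a mpoly set" where
  "Qdeg x y s n = Qker x y s \<inter> Vdeg s n"

definition Qupto :: "(nat \<Rightarrow> 'a::comm_ring_1) \<Rightarrow> 'a \<Rightarrow> nat \<Rightarrow> nat \<Rightarrow> 'a mpoly set" where
  "Qupto x y s n = gen_in (Vset s) (\<Union>k\<in>{..n}. Qdeg x y s k)"

definition rt :: "(nat \<Rightarrow> 'a::comm_ring_1) \<Rightarrow> 'a \<Rightarrow> nat \<Rightarrow> nat" where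
  "rt x y s = (LEAST N. N \<ge> 1 \<and> Qker x y s = Qupto x y s N)"

end

theory Submission
  imports Defs
begin

text \<open>
  Every form of degree n > r + 1 in Q is reduced modulo the form
  G = Y^(r+1) - \<Sum> X_i F_i, which records y^(r+1) \<in> J I^r, to a linear syzygy
  \<Sum> X_i B_i with coefficients of degree n - 1. Peeling off the coefficients from the
  last one downwards, the d-sequence property together with (b) puts the value of each
  coefficient into J_(i-1) I^(n-2); this rewrites the syzygy as a combination of forms of
  Q of degree n - 1, so by induction Q = Q\<langle>r+1\<rangle>. Under (c) and (d) the same
  descent works in degree r + 1 with only Q\<langle>r\<rangle> and G at hand.

  For the lower bound: if the coefficient of Y^k in a form of Q of degree k \<le> r were a
  unit, then y^k \<in> J I^(k-1), hence I^k = J I^(k-1), contradicting the minimality of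
  r. So all forms generating Q\<langle>r\<rangle> have their pure Y-coefficients in the
  maximal ideal, whereas G has Y-coefficient 1, and G \<notin> Q\<langle>r\<rangle>.
\<close>

lemma poly_mapping_eq_sum_single:
  "(p::'k \<Rightarrow>\<^sub>0 'b::comm_monoid_add) =
     (\<Sum>k\<in>Poly_Mapping.keys p. Poly_Mapping.single k (Poly_Mapping.lookup p k))"
proof (rule poly_mapping_eqI)
  fix k'
  show "Poly_Mapping.lookup p k' =
      Poly_Mapping.lookup (\<Sum>k\<in>Poly_Mapping.keys p. Poly_Mapping.single k (Poly_Mapping.lookup p k)) k'"
    by (simp add: lookup_sum lookup_single when_def in_keys_iff)
qed

lemma keys_add_nat:
  "Poly_Mapping.keys ((a::'k \<Rightarrow>\<^sub>0 nat) + b) = Poly_Mapping.keys a \<union> Poly_Mapping.keys b"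
  by (auto simp: in_keys_iff lookup_add)

definition mono_eval :: "(nat \<Rightarrow> 'b::comm_ring_1) \<Rightarrow> (nat \<Rightarrow>\<^sub>0 nat) \<Rightarrow> 'b" where
  "mono_eval z m = (\<Prod>i\<in>Poly_Mapping.keys m. z i ^ Poly_Mapping.lookup m i)"

lemma mono_eval_superset:
  assumes "finite S" "Poly_Mapping.keys m \<subseteq> S"
  shows "mono_eval z m = (\<Prod>i\<in>S. z i ^ Poly_Mapping.lookup m i)"
  unfolding mono_eval_def
  by (rule prod.mono_neutral_left) (use assms in \<open>auto simp: in_keys_iff\<close>)

lemma mono_eval_add: "mono_eval z (a + b) = mono_eval z a * mono_eval z b"
proof -
  let ?S = "Poly_Mapping.keys a \<union> Poly_Mapping.keys b"
  have "mono_eval z (a + b) = (\<Prod>i\<in>?S. z i ^ Poly_Mapping.lookup (a + b) i)"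
    by (rule mono_eval_superset) (auto simp: keys_add_nat)
  also have "\<dots> = (\<Prod>i\<in>?S. z i ^ Poly_Mapping.lookup a i) * (\<Prod>i\<in>?S. z i ^ Poly_Mapping.lookup b i)"
    by (simp add: lookup_add power_add prod.distrib)
  also have "\<dots> = mono_eval z a * mono_eval z b"
    by (simp add: mono_eval_superset[symmetric])
  finally show ?thesis .
qed

lemma mono_eval_zero [simp]: "mono_eval z 0 = 1"
  by (simp add: mono_eval_def)

lemma mono_eval_single [simp]: "mono_eval z (Poly_Mapping.single i k) = z i ^ k"
  by (simp add: mono_eval_def)

definition mpoly_eval :: "('a::comm_ring_1 \<Rightarrow> 'b::comm_ring_1) \<Rightarrow> (nat \<Rightarrow> 'b) \<Rightarrow> 'a mpoly \<Rightarrow> 'b" where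
  "mpoly_eval \<kappa> z F = (\<Sum>m\<in>Poly_Mapping.keys F. \<kappa> (Poly_Mapping.lookup F m) * mono_eval z m)"

locale coeff_ring_hom =
  fixes \<kappa> :: "'a::comm_ring_1 \<Rightarrow> 'b::comm_ring_1"
  assumes hom_0: "\<kappa> 0 = 0"
    and hom_add: "\<And>a b. \<kappa> (a + b) = \<kappa> a + \<kappa> b"
    and hom_mult: "\<And>a b. \<kappa> (a * b) = \<kappa> a * \<kappa> b"
    and hom_1: "\<kappa> 1 = 1"
begin

lemma mpoly_eval_superset:
  assumes "finite S" "Poly_Mapping.keys F \<subseteq> S"
  shows "mpoly_eval \<kappa> z F = (\<Sum>m\<in>S. \<kappa> (Poly_Mapping.lookup F m) * mono_eval z m)"
  unfolding mpoly_eval_def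
  by (rule sum.mono_neutral_left) (use assms in \<open>auto simp: in_keys_iff hom_0\<close>)

lemma mpoly_eval_add: "mpoly_eval \<kappa> z (F + G) = mpoly_eval \<kappa> z F + mpoly_eval \<kappa> z G"
proof -
  let ?S = "Poly_Mapping.keys F \<union> Poly_Mapping.keys G"
  have "mpoly_eval \<kappa> z (F + G) = (\<Sum>m\<in>?S. \<kappa> (Poly_Mapping.lookup (F + G) m) * mono_eval z m)"
    by (rule mpoly_eval_superset) (use keys_add[of F G] in auto)
  also have "\<dots> = (\<Sum>m\<in>?S. \<kappa> (Poly_Mapping.lookup F m) * mono_eval z m)
      + (\<Sum>m\<in>?S. \<kappa> (Poly_Mapping.lookup G m) * mono_eval z m)"
    by (simp add: lookup_add hom_add distrib_right sum.distrib)
  also have "\<dots> = mpoly_eval \<kappa> z F + mpoly_eval \<kappa> z G"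
    by (simp add: mpoly_eval_superset[symmetric])
  finally show ?thesis .
qed

lemma mpoly_eval_0 [simp]: "mpoly_eval \<kappa> z 0 = 0"
  by (simp add: mpoly_eval_def)

lemma mpoly_eval_diff: "mpoly_eval \<kappa> z (F - G) = mpoly_eval \<kappa> z F - mpoly_eval \<kappa> z G"
  using mpoly_eval_add[where F="F - G" and G=G] by simp

lemma mpoly_eval_sum: "mpoly_eval \<kappa> z (sum f A) = (\<Sum>a\<in>A. mpoly_eval \<kappa> z (f a))"
  by (induction A rule: infinite_finite_induct) (auto simp: mpoly_eval_add)

lemma mpoly_eval_single [simp]: "mpoly_eval \<kappa> z (Poly_Mapping.single m c) = \<kappa> c * mono_eval z m"
  by (simp add: mpoly_eval_def hom_0)

lemma mpoly_eval_mult: "mpoly_eval \<kappa> z (F * G) = mpoly_eval \<kappa> z F * mpoly_eval \<kappa> z G"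
proof -
  have "F * G = (\<Sum>m\<in>Poly_Mapping.keys F. Poly_Mapping.single m (Poly_Mapping.lookup F m)) *
               (\<Sum>m\<in>Poly_Mapping.keys G. Poly_Mapping.single m (Poly_Mapping.lookup G m))"
    by (simp add: poly_mapping_eq_sum_single[symmetric])
  also have "\<dots> = (\<Sum>m\<in>Poly_Mapping.keys F. \<Sum>m'\<in>Poly_Mapping.keys G.
       Poly_Mapping.single (m + m') (Poly_Mapping.lookup F m * Poly_Mapping.lookup G m'))"
    by (simp add: sum_product mult_single)
  finally have "mpoly_eval \<kappa> z (F * G) = (\<Sum>m\<in>Poly_Mapping.keys F. \<Sum>m'\<in>Poly_Mapping.keys G.
       \<kappa> (Poly_Mapping.lookup F m) * mono_eval z m * (\<kappa> (Poly_Mapping.lookup G m') * mono_eval z m'))"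
    by (simp add: mpoly_eval_sum hom_mult mono_eval_add algebra_simps)
  also have "\<dots> = mpoly_eval \<kappa> z F * mpoly_eval \<kappa> z G"
    by (simp add: mpoly_eval_def sum_product)
  finally show ?thesis .
qed

end

interpretation id_hom: coeff_ring_hom "\<lambda>c::'a::comm_ring_1. c"
  by unfold_locales auto

interpretation const_hom: coeff_ring_hom "\<lambda>c::'a::comm_ring_1. [:c:]"
  by unfold_locales auto

lemma mdeg_superset:
  assumes "finite S" "Poly_Mapping.keys m \<subseteq> S"
  shows "mdeg m = (\<Sum>i\<in>S. Poly_Mapping.lookup m i)"
  unfolding mdeg_def
  by (rule sum.mono_neutral_left) (use assms in \<open>auto simp: in_keys_iff\<close>)

lemma mdeg_add: "mdeg (a + b) = mdeg a + mdeg b"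
proof -
  let ?S = "Poly_Mapping.keys a \<union> Poly_Mapping.keys b"
  have "mdeg (a + b) = (\<Sum>i\<in>?S. Poly_Mapping.lookup (a + b) i)"
    by (rule mdeg_superset) (auto simp: keys_add_nat)
  also have "\<dots> = (\<Sum>i\<in>?S. Poly_Mapping.lookup a i) + (\<Sum>i\<in>?S. Poly_Mapping.lookup b i)"
    by (simp add: lookup_add sum.distrib)
  also have "\<dots> = mdeg a + mdeg b"
    by (simp add: mdeg_superset[symmetric])
  finally show ?thesis .
qed

lemma mdeg_single [simp]: "mdeg (Poly_Mapping.single i k) = k"
  by (simp add: mdeg_def)

lemma mdeg_eq_0_iff [simp]: "mdeg m = 0 \<longleftrightarrow> m = 0"
proof
  assume "mdeg m = 0"
  then have "\<forall>i\<in>Poly_Mapping.keys m. Poly_Mapping.lookup m i = 0"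
    unfolding mdeg_def by simp
  then show "m = 0" by (intro poly_mapping_eqI) (auto simp: in_keys_iff)
qed (simp add: mdeg_def)

lemma Vset_add: "F \<in> Vset s \<Longrightarrow> G \<in> Vset s \<Longrightarrow> F + G \<in> Vset s"
  unfolding Vset_def using keys_add[of F G] by blast

lemma Vset_uminus: "F \<in> Vset s \<Longrightarrow> - F \<in> Vset s"
  unfolding Vset_def by simp

lemma Vset_0 [simp]: "0 \<in> Vset s"
  unfolding Vset_def by simp

lemma Vset_single: "Poly_Mapping.keys m \<subseteq> {0..s} \<Longrightarrow> Poly_Mapping.single m c \<in> Vset s"
  unfolding Vset_def by simp

lemma Vset_mult: "F \<in> Vset s \<Longrightarrow> G \<in> Vset s \<Longrightarrow> F * G \<in> Vset s"
  unfolding Vset_def using keys_mult[of F G] by (fastforce simp: keys_add_nat)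

lemma Vdeg_add: "F \<in> Vdeg s n \<Longrightarrow> G \<in> Vdeg s n \<Longrightarrow> F + G \<in> Vdeg s n"
  unfolding Vdeg_def homogeneous_def using keys_add[of F G] by (auto intro: Vset_add)

lemma Vdeg_diff: "F \<in> Vdeg s n \<Longrightarrow> G \<in> Vdeg s n \<Longrightarrow> F - G \<in> Vdeg s n"
  using Vdeg_add[of F s n "- G"] unfolding Vdeg_def homogeneous_def by (simp add: Vset_uminus)

lemma Vdeg_0 [simp]: "0 \<in> Vdeg s n"
  unfolding Vdeg_def homogeneous_def Vset_def by simp

lemma Vdeg_single:
  "Poly_Mapping.keys m \<subseteq> {0..s} \<Longrightarrow> mdeg m = n \<Longrightarrow> Poly_Mapping.single m c \<in> Vdeg s n"
  unfolding Vdeg_def homogeneous_def by (simp add: Vset_single)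

lemma Vdeg_mult: "F \<in> Vdeg s a \<Longrightarrow> G \<in> Vdeg s b \<Longrightarrow> F * G \<in> Vdeg s (a + b)"
  unfolding Vdeg_def homogeneous_def using keys_mult[of F G]
  by (fastforce simp: mdeg_add intro: Vset_mult)

lemma Vdeg_sum: "(\<And>a. a \<in> A \<Longrightarrow> f a \<in> Vdeg s n) \<Longrightarrow> sum f A \<in> Vdeg s n"
  by (induction A rule: infinite_finite_induct) (auto intro: Vdeg_add)

lemma Vdeg_Vset: "F \<in> Vdeg s n \<Longrightarrow> F \<in> Vset s"
  unfolding Vdeg_def by simp

lemma var_Vdeg: "i \<le> s \<Longrightarrow> var i \<in> Vdeg s 1"
  unfolding var_def by (rule Vdeg_single) auto

lemma var_mult_Vdeg_diff_2:
  assumes "i \<le> s" "2 \<le> n" "F \<in> Vdeg s (n - 2)"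
  shows "var i * F \<in> Vdeg s (n - 1)"
proof -
  have "1 + (n - 2) = n - 1" using assms(2) by simp
  then show ?thesis using Vdeg_mult[OF var_Vdeg[OF assms(1)] assms(3)] by simp
qed

lemma const_Vdeg: "Poly_Mapping.single 0 c \<in> Vdeg s 0"
  by (rule Vdeg_single) auto

lemma Vdeg_0_eq_const:
  assumes "H \<in> Vdeg s 0"
  shows "H = Poly_Mapping.single 0 (Poly_Mapping.lookup H 0)"
proof (rule poly_mapping_eqI)
  fix k
  show "Poly_Mapping.lookup H k = Poly_Mapping.lookup (Poly_Mapping.single 0 (Poly_Mapping.lookup H 0)) k"
  proof (cases "k \<in> Poly_Mapping.keys H")
    case True
    then have "k = 0" using assms by (auto simp: Vdeg_def homogeneous_def)
    then show ?thesis by simp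
  qed (auto simp: lookup_single when_def in_keys_iff)
qed

lemma Yv_pow: "(Yv::'a::comm_ring_1 mpoly) ^ k = Poly_Mapping.single (Poly_Mapping.single 0 k) 1"
  by (induction k) (simp_all add: var_def mult_single single_add[symmetric] add.commute)

lemma Yv_pow_Vdeg: "(Yv::'a::comm_ring_1 mpoly) ^ k \<in> Vdeg s k"
  unfolding Yv_pow by (rule Vdeg_single) auto

abbreviation rees_point :: "(nat \<Rightarrow> 'a) \<Rightarrow> 'a \<Rightarrow> nat \<Rightarrow> 'a" where
  "rees_point x y \<equiv> \<lambda>i. if i = 0 then y else x i"

definition rees_eval :: "(nat \<Rightarrow> 'a::comm_ring_1) \<Rightarrow> 'a \<Rightarrow> 'a mpoly \<Rightarrow> 'a" where
  "rees_eval x y F = mpoly_eval (\<lambda>c. c) (rees_point x y) F"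

lemma rees_map_eq_mpoly_eval:
  "rees_map x y F = mpoly_eval (\<lambda>c. [:c:]) (\<lambda>i. [:0, rees_point x y i:]) F"
  unfolding rees_map_def mpoly_eval_def mono_eval_def
  by (simp add: if_distrib[of "\<lambda>c. [:0, c:]"])

lemma prod_monom: "(\<Prod>i\<in>K. monom (f i) (g i)) = monom (\<Prod>i\<in>K. f i) (\<Sum>i\<in>K. g i)"
  by (induction K rule: infinite_finite_induct) (auto simp: mult_monom monom_0 one_pCons)

lemma mono_eval_pCons_0: "mono_eval (\<lambda>i. [:0, z i:]) m = monom (mono_eval z m) (mdeg m)"
proof -
  have "[:0, a:] = monom a 1" for a :: 'a
    by (simp add: monom_Suc monom_0)
  then have "mono_eval (\<lambda>i. [:0, z i:]) m =
      (\<Prod>i\<in>Poly_Mapping.keys m. monom (z i ^ Poly_Mapping.lookup m i) (Poly_Mapping.lookup m i))"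
    unfolding mono_eval_def by (simp add: monom_power)
  then show ?thesis
    by (simp add: prod_monom mono_eval_def mdeg_def)
qed

lemma rees_map_homogeneous:
  assumes "homogeneous n F"
  shows "rees_map x y F = monom (rees_eval x y F) n"
proof -
  have "rees_map x y F = (\<Sum>m\<in>Poly_Mapping.keys F.
      monom (Poly_Mapping.lookup F m * mono_eval (rees_point x y) m) n)"
    unfolding rees_map_eq_mpoly_eval mpoly_eval_def using assms
    by (intro sum.cong refl) (auto simp: homogeneous_def mono_eval_pCons_0 smult_monom[symmetric])
  also have "\<dots> = monom (rees_eval x y F) n"
    by (simp add: rees_eval_def mpoly_eval_def monom_sum)
  finally show ?thesis .
qed

lemma Qdeg_iff: "F \<in> Qdeg x y s n \<longleftrightarrow> F \<in> Vdeg s n \<and> rees_eval x y F = 0"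
  unfolding Qdeg_def Qker_def Vdeg_def using rees_map_homogeneous[of n F x y] by auto

lemma rees_eval_add: "rees_eval x y (F + G) = rees_eval x y F + rees_eval x y G"
  by (simp add: rees_eval_def id_hom.mpoly_eval_add)

lemma rees_eval_diff: "rees_eval x y (F - G) = rees_eval x y F - rees_eval x y G"
  by (simp add: rees_eval_def id_hom.mpoly_eval_diff)

lemma rees_eval_mult: "rees_eval x y (F * G) = rees_eval x y F * rees_eval x y G"
  by (simp add: rees_eval_def id_hom.mpoly_eval_mult)

lemma rees_eval_sum: "rees_eval x y (sum f A) = (\<Sum>a\<in>A. rees_eval x y (f a))"
  by (simp add: rees_eval_def id_hom.mpoly_eval_sum)

lemma rees_eval_var: "rees_eval x y (var i) = rees_point x y i"
  by (simp add: rees_eval_def var_def)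

lemma rees_eval_const: "rees_eval x y (Poly_Mapping.single 0 c) = c"
  by (simp add: rees_eval_def)

lemma rees_eval_const_Yv_pow: "rees_eval x y (Poly_Mapping.single 0 c * Yv ^ k) = c * y ^ k"
  by (simp add: Yv_pow mult_single rees_eval_def)

lemma rees_eval_X_comb:
  assumes "0 \<notin> K"
  shows "rees_eval x y (\<Sum>l\<in>K. var l * B l) = (\<Sum>l\<in>K. x l * rees_eval x y (B l))"
  using assms by (auto simp: rees_eval_sum rees_eval_mult rees_eval_var intro: sum.cong)

definition homog_comp :: "nat \<Rightarrow> 'a::comm_ring_1 mpoly \<Rightarrow> 'a mpoly" where
  "homog_comp n F = (\<Sum>m\<in>{m\<in>Poly_Mapping.keys F. mdeg m = n}. Poly_Mapping.single m (Poly_Mapping.lookup F m))"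

lemma sum_homog_comp: "(\<Sum>n\<in>mdeg ` Poly_Mapping.keys F. homog_comp n F) = F"
proof -
  have "F = (\<Sum>m\<in>Poly_Mapping.keys F. Poly_Mapping.single m (Poly_Mapping.lookup F m))"
    by (rule poly_mapping_eq_sum_single)
  also have "\<dots> = (\<Sum>n\<in>mdeg ` Poly_Mapping.keys F. homog_comp n F)"
    unfolding homog_comp_def by (rule sum.image_gen) simp
  finally show ?thesis ..
qed

lemma keys_homog_comp: "Poly_Mapping.keys (homog_comp n F) \<subseteq> {m\<in>Poly_Mapping.keys F. mdeg m = n}"
proof -
  have "Poly_Mapping.keys (homog_comp n F) \<subseteq> (\<Union>m\<in>{m\<in>Poly_Mapping.keys F. mdeg m = n}.
      Poly_Mapping.keys (Poly_Mapping.single m (Poly_Mapping.lookup F m)))"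
    unfolding homog_comp_def by (rule keys_sum)
  also have "\<dots> \<subseteq> {m\<in>Poly_Mapping.keys F. mdeg m = n}" by auto
  finally show ?thesis .
qed

lemma homog_comp_Vdeg: "F \<in> Vset s \<Longrightarrow> homog_comp n F \<in> Vdeg s n"
  using keys_homog_comp[of n F] unfolding Vdeg_def Vset_def homogeneous_def by blast

lemma rees_eval_homog_comp:
  assumes "rees_map x y F = 0"
  shows "rees_eval x y (homog_comp n F) = 0"
proof -
  let ?D = "mdeg ` Poly_Mapping.keys F"
  have "rees_map x y F = (\<Sum>n'\<in>?D. rees_map x y (homog_comp n' F))"
    unfolding rees_map_eq_mpoly_eval
    by (subst sum_homog_comp[symmetric]) (simp add: const_hom.mpoly_eval_sum)
  also have "\<dots> = (\<Sum>n'\<in>?D. monom (rees_eval x y (homog_comp n' F)) n')"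
    by (intro sum.cong refl rees_map_homogeneous)
       (use keys_homog_comp in \<open>auto simp: homogeneous_def\<close>)
  finally have "coeff (rees_map x y F) n = (\<Sum>n'\<in>?D. coeff (monom (rees_eval x y (homog_comp n' F)) n') n)"
    by (simp add: coeff_sum)
  also have "\<dots> = (if n \<in> ?D then rees_eval x y (homog_comp n F) else 0)"
    by (simp add: coeff_monom)
  finally have "(if n \<in> ?D then rees_eval x y (homog_comp n F) else 0) = 0"
    using assms by simp
  moreover have "n \<notin> ?D \<Longrightarrow> homog_comp n F = 0"
    unfolding homog_comp_def by (rule sum.neutral) auto
  ultimately show ?thesis by (auto split: if_splits simp: rees_eval_def)
qed

definition Y_part :: "'a::comm_ring_1 mpoly \<Rightarrow> 'a poly" where
  "Y_part F = mpoly_eval (\<lambda>c. [:c:]) (\<lambda>i. if i = 0 then [:0, 1:] else 0) F"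

lemma Y_part_add: "Y_part (F + G) = Y_part F + Y_part G"
  by (simp add: Y_part_def const_hom.mpoly_eval_add)

lemma Y_part_diff: "Y_part (F - G) = Y_part F - Y_part G"
  by (simp add: Y_part_def const_hom.mpoly_eval_diff)

lemma Y_part_mult: "Y_part (F * G) = Y_part F * Y_part G"
  by (simp add: Y_part_def const_hom.mpoly_eval_mult)

lemma Y_part_const_Yv_pow: "Y_part (Poly_Mapping.single 0 c * Yv ^ k) = monom c k"
  by (simp add: Yv_pow mult_single Y_part_def monom_altdef)

lemma Y_part_X_comb:
  assumes "0 \<notin> K"
  shows "Y_part (\<Sum>l\<in>K. var l * B l) = 0"
  using assms by (auto simp: Y_part_def const_hom.mpoly_eval_sum const_hom.mpoly_eval_mult var_def
      intro!: sum.neutral)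

definition is_subring :: "'a::comm_ring_1 set \<Rightarrow> bool" where
  "is_subring C \<longleftrightarrow> 0 \<in> C \<and> -1 \<in> C \<and> (\<forall>a\<in>C. \<forall>b\<in>C. a + b \<in> C \<and> a * b \<in> C)"

lemma is_subring_UNIV [simp]: "is_subring UNIV"
  by (simp add: is_subring_def)

lemma is_subring_Vset: "is_subring (Vset s)"
  unfolding is_subring_def using Vset_add Vset_mult Vset_uminus[of 1 s] Vset_single[of 0 s 1]
  by (auto simp: one_poly_mapping_def[symmetric])

lemma gen_in_subset: "S \<subseteq> gen_in C S"
  by (auto simp: gen_in_def)

lemma gen_in_least: "ideal_in C A \<Longrightarrow> S \<subseteq> A \<Longrightarrow> gen_in C S \<subseteq> A"
  by (auto simp: gen_in_def)

lemma ideal_in_gen_in: "is_subring C \<Longrightarrow> S \<subseteq> C \<Longrightarrow> ideal_in C (gen_in C S)"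
proof -
  assume C: "is_subring C" and S: "S \<subseteq> C"
  have "ideal_in C C" using C by (auto simp: is_subring_def ideal_in_def)
  with S have "\<Inter> {A. ideal_in C A \<and> S \<subseteq> A} \<subseteq> C" by blast
  then show ?thesis
    unfolding gen_in_def by (auto simp: ideal_in_def)
qed

lemma ideal_in_0: "ideal_in C A \<Longrightarrow> 0 \<in> A"
  by (simp add: ideal_in_def)

lemma ideal_in_add: "ideal_in C A \<Longrightarrow> a \<in> A \<Longrightarrow> b \<in> A \<Longrightarrow> a + b \<in> A"
  by (simp add: ideal_in_def)

lemma ideal_in_mult: "ideal_in C A \<Longrightarrow> c \<in> C \<Longrightarrow> a \<in> A \<Longrightarrow> c * a \<in> A"
  by (simp add: ideal_in_def)

lemma ideal_in_subset: "ideal_in C A \<Longrightarrow> A \<subseteq> C"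
  by (simp add: ideal_in_def)

lemma ideal_in_sum: "ideal_in C A \<Longrightarrow> (\<And>i. i \<in> K \<Longrightarrow> f i \<in> A) \<Longrightarrow> sum f K \<in> A"
  by (induction K rule: infinite_finite_induct) (auto intro: ideal_in_0 ideal_in_add)

lemma ideal_mult_left: "ideal A \<Longrightarrow> a \<in> A \<Longrightarrow> c * a \<in> A"
  by (simp add: ideal_in_def)

lemma ideal_mult_right: "ideal A \<Longrightarrow> a \<in> A \<Longrightarrow> a * c \<in> A"
  using ideal_mult_left[of A a c] by (simp add: mult.commute)

lemma ideal_uminus: "ideal A \<Longrightarrow> a \<in> A \<Longrightarrow> - a \<in> A"
  using ideal_mult_left[of A a "-1"] by simp

lemma ideal_diff: "ideal A \<Longrightarrow> a \<in> A \<Longrightarrow> b \<in> A \<Longrightarrow> a - b \<in> A"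
  using ideal_in_add[of UNIV A a "- b"] ideal_uminus[of A b] by simp

lemma ideal_UNIV: "ideal UNIV"
  by (simp add: ideal_in_def)

lemma ideal_gen: "ideal (gen S)"
  by (rule ideal_in_gen_in) auto

definition lin_comb :: "(nat \<Rightarrow> 'a::comm_ring_1) \<Rightarrow> nat set \<Rightarrow> 'a set \<Rightarrow> 'a set" where
  "lin_comb x K B = {\<Sum>l\<in>K. x l * b l | b. \<forall>l\<in>K. b l \<in> B}"

lemma lin_comb_mem: "(\<And>l. l \<in> K \<Longrightarrow> b l \<in> B) \<Longrightarrow> (\<Sum>l\<in>K. x l * b l) \<in> lin_comb x K B"
  unfolding lin_comb_def by blast

lemma lin_comb_E:
  assumes "a \<in> lin_comb x K B"
  obtains b where "a = (\<Sum>l\<in>K. x l * b l)" "\<forall>l\<in>K. b l \<in> B"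
proof -
  from assms obtain b where "a = (\<Sum>l\<in>K. x l * b l)" "\<forall>l\<in>K. b l \<in> B"
    unfolding lin_comb_def by blast
  then show thesis by (rule that)
qed

lemma lin_comb_0: "0 \<in> B \<Longrightarrow> 0 \<in> lin_comb x K B"
  using lin_comb_mem[where b="\<lambda>_. 0" and B=B and x=x and K=K] by simp

lemma lin_comb_add:
  assumes B: "\<And>a b. a \<in> B \<Longrightarrow> b \<in> B \<Longrightarrow> a + b \<in> B"
    and u: "u \<in> lin_comb x K B" and v: "v \<in> lin_comb x K B"
  shows "u + v \<in> lin_comb x K B"
proof -
  obtain b where u_eq: "u = (\<Sum>l\<in>K. x l * b l)" and b: "\<forall>l\<in>K. b l \<in> B"
    using u by (rule lin_comb_E)
  obtain b' where v_eq: "v = (\<Sum>l\<in>K. x l * b' l)" and b': "\<forall>l\<in>K. b' l \<in> B"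
    using v by (rule lin_comb_E)
  have "u + v = (\<Sum>l\<in>K. x l * (b l + b' l))"
    unfolding u_eq v_eq by (simp add: sum.distrib distrib_left)
  then show ?thesis using lin_comb_mem[of K "\<lambda>l. b l + b' l" B x] b b' B by simp
qed

lemma lin_comb_sum:
  assumes "0 \<in> B" "\<And>a b. a \<in> B \<Longrightarrow> b \<in> B \<Longrightarrow> a + b \<in> B" "\<And>i. i \<in> A \<Longrightarrow> f i \<in> lin_comb x K B"
  shows "sum f A \<in> lin_comb x K B"
  using assms(3)
  by (induction A rule: infinite_finite_induct) (auto intro: lin_comb_0[OF assms(1)] lin_comb_add[OF assms(2)])

lemma ideal_lin_comb:
  assumes B: "ideal B"
  shows "ideal (lin_comb x K B)"
  unfolding ideal_in_def
proof (intro conjI ballI)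
  show "0 \<in> lin_comb x K B" by (rule lin_comb_0[OF ideal_in_0[OF B]])
next
  fix a b assume ab: "a \<in> lin_comb x K B" "b \<in> lin_comb x K B"
  show "a + b \<in> lin_comb x K B" using lin_comb_add[OF _ ab] ideal_in_add[OF B] by blast
next
  fix c a assume "a \<in> lin_comb x K B"
  then obtain b where a: "a = (\<Sum>l\<in>K. x l * b l)" "\<forall>l\<in>K. b l \<in> B"
    by (rule lin_comb_E)
  have "c * a = (\<Sum>l\<in>K. x l * (c * b l))"
    unfolding a by (simp add: sum_distrib_left mult.left_commute)
  then show "c * a \<in> lin_comb x K B"
    using lin_comb_mem[of K "\<lambda>l. c * b l" B x] a(2) ideal_mult_left[OF B] by simp
qed simp

lemma lin_comb_Suc:
  "lin_comb x {1..Suc t} B = {v + x (Suc t) * b | v b. v \<in> lin_comb x {1..t} B \<and> b \<in> B}"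
proof (intro set_eqI iffI)
  fix u assume "u \<in> lin_comb x {1..Suc t} B"
  then obtain b where u: "u = (\<Sum>l\<in>{1..Suc t}. x l * b l)" and b: "\<forall>l\<in>{1..Suc t}. b l \<in> B"
    by (rule lin_comb_E)
  have "u = (\<Sum>l\<in>{1..t}. x l * b l) + x (Suc t) * b (Suc t)" unfolding u by simp
  moreover have "(\<Sum>l\<in>{1..t}. x l * b l) \<in> lin_comb x {1..t} B" by (rule lin_comb_mem) (use b in auto)
  moreover have "b (Suc t) \<in> B" using b by simp
  ultimately show "u \<in> {v + x (Suc t) * b | v b. v \<in> lin_comb x {1..t} B \<and> b \<in> B}"
    by blast
next
  fix u assume "u \<in> {v + x (Suc t) * b | v b. v \<in> lin_comb x {1..t} B \<and> b \<in> B}"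
  then obtain v c where u: "u = v + x (Suc t) * c" and v: "v \<in> lin_comb x {1..t} B" and c: "c \<in> B"
    by blast
  obtain b where v_eq: "v = (\<Sum>l\<in>{1..t}. x l * b l)" and b: "\<forall>l\<in>{1..t}. b l \<in> B"
    using v by (rule lin_comb_E)
  have "(\<Sum>l\<in>{1..t}. x l * (b(Suc t := c)) l) = v" unfolding v_eq by (rule sum.cong) auto
  then have "u = (\<Sum>l\<in>{1..Suc t}. x l * (b(Suc t := c)) l)" using u by simp
  then show "u \<in> lin_comb x {1..Suc t} B"
    using lin_comb_mem[of "{1..Suc t}" "b(Suc t := c)" B x] b c by simp
qed

lemma gen_image_eq_lin_comb:
  assumes "finite K"
  shows "gen (x ` K) = lin_comb x K UNIV"
proof
  show "gen (x ` K) \<subseteq> lin_comb x K UNIV"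
  proof (rule gen_in_least[OF ideal_lin_comb[OF ideal_UNIV]], rule subsetI)
    fix a assume "a \<in> x ` K"
    then obtain l where l: "l \<in> K" "a = x l" by auto
    have "(\<Sum>j\<in>K. x j * (if j = l then 1 else 0)) = a"
      using l assms by (simp add: if_distrib[of "\<lambda>c. x _ * c"] cong: if_cong)
    then show "a \<in> lin_comb x K UNIV" using lin_comb_mem[of K _ UNIV x] by (metis UNIV_I)
  qed
  show "lin_comb x K UNIV \<subseteq> gen (x ` K)"
  proof
    fix a assume "a \<in> lin_comb x K UNIV"
    then obtain b where "a = (\<Sum>l\<in>K. x l * b l)" by (rule lin_comb_E)
    moreover have "(\<Sum>l\<in>K. x l * b l) \<in> gen (x ` K)"
      by (rule ideal_in_sum[OF ideal_gen], rule ideal_mult_right[OF ideal_gen])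
         (use gen_in_subset[of "x ` K" UNIV] in blast)
    ultimately show "a \<in> gen (x ` K)" by simp
  qed
qed

lemma ideal_mult_ideal: "ideal (ideal_mult A B)"
  unfolding ideal_mult_def by (rule ideal_gen)

lemma ideal_mult_mem: "a \<in> A \<Longrightarrow> b \<in> B \<Longrightarrow> a * b \<in> ideal_mult A B"
  unfolding ideal_mult_def using gen_in_subset[of "{a * b |a b. a \<in> A \<and> b \<in> B}" UNIV] by blast

lemma ideal_mult_gen_image:
  assumes "finite K" "ideal B"
  shows "ideal_mult (gen (x ` K)) B = lin_comb x K B"
proof
  show "ideal_mult (gen (x ` K)) B \<subseteq> lin_comb x K B"
    unfolding ideal_mult_def
  proof (rule gen_in_least[OF ideal_lin_comb[OF assms(2)]], rule subsetI)
    fix u assume "u \<in> {a * b |a b. a \<in> gen (x ` K) \<and> b \<in> B}"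
    then obtain a b where u: "u = a * b" and a: "a \<in> gen (x ` K)" and b: "b \<in> B" by blast
    obtain c where a_eq: "a = (\<Sum>l\<in>K. x l * c l)"
      using a unfolding gen_image_eq_lin_comb[OF assms(1)] by (rule lin_comb_E)
    have "u = (\<Sum>l\<in>K. x l * (c l * b))"
      unfolding u a_eq by (simp add: sum_distrib_right mult.assoc)
    then show "u \<in> lin_comb x K B"
      using lin_comb_mem[of K "\<lambda>l. c l * b" B x] ideal_mult_left[OF assms(2) b] by simp
  qed
  show "lin_comb x K B \<subseteq> ideal_mult (gen (x ` K)) B"
  proof
    fix u assume "u \<in> lin_comb x K B"
    then obtain b where u: "u = (\<Sum>l\<in>K. x l * b l)" and b: "\<forall>l\<in>K. b l \<in> B"
      by (rule lin_comb_E)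
    have "\<And>l. l \<in> K \<Longrightarrow> x l \<in> gen (x ` K)" using gen_in_subset[of "x ` K" UNIV] by blast
    then show "u \<in> ideal_mult (gen (x ` K)) B"
      unfolding u by (intro ideal_in_sum[OF ideal_mult_ideal] ideal_mult_mem) (use b in auto)
  qed
qed

lemma ideal_ideal_pow: "ideal (ideal_pow I n)"
  by (cases n) (simp_all add: ideal_UNIV ideal_mult_ideal)

lemma ideal_pow_1: "ideal I \<Longrightarrow> ideal_pow I 1 = I"
proof -
  assume I: "ideal I"
  have "ideal_mult I UNIV \<subseteq> I"
    unfolding ideal_mult_def by (rule gen_in_least[OF I]) (use I in \<open>auto simp: ideal_mult_right\<close>)
  moreover have "I \<subseteq> ideal_mult I UNIV"
    using ideal_mult_mem[of _ I 1 UNIV] by auto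
  ultimately show ?thesis by simp
qed

lemma ideal_pow_mult_mem:
  assumes I: "ideal I"
  shows "u \<in> ideal_pow I a \<Longrightarrow> v \<in> ideal_pow I b \<Longrightarrow> u * v \<in> ideal_pow I (a + b)"
proof (induction a arbitrary: u v)
  case 0
  then show ?case using ideal_mult_left[OF ideal_ideal_pow] by simp
next
  case (Suc a)
  let ?M = "{u. \<forall>v\<in>ideal_pow I b. u * v \<in> ideal_pow I (Suc a + b)}"
  have M: "ideal ?M"
    unfolding ideal_in_def
  proof (intro conjI ballI)
    show "0 \<in> ?M" using ideal_in_0[OF ideal_ideal_pow[of I "Suc a + b"]] by simp
  next
    fix p q assume "p \<in> ?M" "q \<in> ?M"
    then show "p + q \<in> ?M"
      using ideal_in_add[OF ideal_ideal_pow[of I "Suc a + b"]] by (simp add: distrib_right)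
  next
    fix c p assume "p \<in> ?M"
    then show "c * p \<in> ?M"
      using ideal_mult_left[OF ideal_ideal_pow[of I "Suc a + b"]] by (simp add: mult.assoc)
  qed simp
  have "ideal_pow I (Suc a) \<subseteq> ?M"
    unfolding ideal_pow.simps ideal_mult_def
  proof (rule gen_in_least[OF M], rule subsetI)
    fix w assume "w \<in> {p * q |p q. p \<in> I \<and> q \<in> ideal_pow I a}"
    then obtain p q where w: "w = p * q" "p \<in> I" "q \<in> ideal_pow I a" by blast
    have "p * (q * v) \<in> ideal_pow I (Suc a + b)" if "v \<in> ideal_pow I b" for v
      using Suc.IH[OF w(3) that] w(2) by (simp add: ideal_mult_mem)
    then show "w \<in> ?M" using w(1) by (simp add: mult.assoc)
  qed
  then show ?case using Suc.prems by blast
qed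

lemma power_mem_ideal_pow: "ideal I \<Longrightarrow> u \<in> I \<Longrightarrow> u ^ k \<in> ideal_pow I k"
  by (induction k) (use ideal_pow_mult_mem[of I u 1] ideal_pow_1 in auto)

lemma Jseq_eq_lin_comb: "Jseq x k = lin_comb x {1..k} UNIV"
  unfolding Jseq_def by (rule gen_image_eq_lin_comb) simp

lemma ideal_Jseq: "ideal (Jseq x k)"
  unfolding Jseq_def by (rule ideal_gen)

lemma Jseq_mono: "k \<le> k' \<Longrightarrow> Jseq x k \<subseteq> Jseq x k'"
  unfolding Jseq_def
  by (rule gen_in_least[OF ideal_gen]) (use gen_in_subset[of "x ` {1..k'}" UNIV] in auto)

lemma Jseq_0: "Jseq x 0 = {0}"
  unfolding Jseq_eq_lin_comb lin_comb_def by simp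

lemma Jseq_Suc_E:
  assumes "a \<in> Jseq x (Suc t)"
  obtains v b where "a = v + x (Suc t) * b" "v \<in> Jseq x t"
  using assms unfolding Jseq_eq_lin_comb lin_comb_Suc by blast

lemma Jseq_mult_eq_lin_comb: "ideal B \<Longrightarrow> ideal_mult (Jseq x k) B = lin_comb x {1..k} B"
  unfolding Jseq_def by (rule ideal_mult_gen_image) auto

lemma lin_comb_subset_Jseq: "lin_comb x {1..k} B \<subseteq> Jseq x k"
proof
  fix u assume "u \<in> lin_comb x {1..k} B"
  then obtain b where u: "u = (\<Sum>l\<in>{1..k}. x l * b l)" by (rule lin_comb_E)
  then show "u \<in> Jseq x k"
    unfolding Jseq_eq_lin_comb using lin_comb_mem[of "{1..k}" b UNIV x] by simp
qed

lemma d_sequence_colon_eq: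
  assumes "d_sequence x s" "i < j" "j \<le> s"
  shows "colon (Jseq x i) (x (Suc i) * x j) = colon (Jseq x i) (x j)"
proof -
  have "i \<le> s - 1 \<and> i + 1 \<le> j \<and> j \<le> s" using assms(2,3) by auto
  then have "colon (Jseq x i) (x (i + 1) * x j) = colon (Jseq x i) (x j)"
    using assms(1) unfolding d_sequence_def by blast
  then show ?thesis by simp
qed

lemma d_sequence_mem_Jseq:
  assumes ds: "d_sequence x s" and k: "k \<in> {1..s}" and a: "a \<in> Jseq x s"
    and xa: "x k * a \<in> Jseq x (k - 1)"
  shows "a \<in> Jseq x (k - 1)"
proof -
  have col: "a * x j \<in> Jseq x (k - 1)" if "k \<le> j" "j \<le> s" for j
  proof -
    have "a \<in> colon (Jseq x (k - 1)) (x (Suc (k - 1)) * x j)"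
      using ideal_mult_right[OF ideal_Jseq xa, of "x j"] k by (simp add: colon_def ac_simps)
    also have "\<dots> = colon (Jseq x (k - 1)) (x j)"
      by (rule d_sequence_colon_eq[OF ds]) (use that k in auto)
    finally show ?thesis by (simp add: colon_def)
  qed
  show ?thesis
  proof (rule inc_induct[of "k - 1" s "\<lambda>t. a \<in> Jseq x t"])
    show "k - 1 \<le> s" "a \<in> Jseq x s" using k a by auto
  next
    fix t assume t: "k - 1 \<le> t" "t < s" and "a \<in> Jseq x (Suc t)"
    then obtain v w where a_eq: "a = v + x (Suc t) * w" and v: "v \<in> Jseq x t"
      by (elim Jseq_Suc_E)
    have "a * x (Suc t) \<in> Jseq x t"
      using col[of "Suc t"] Jseq_mono[of "k - 1" t x] t by auto
    moreover have "w * (x (Suc t) * x (Suc t)) = a * x (Suc t) - v * x (Suc t)"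
      unfolding a_eq by (simp add: algebra_simps)
    ultimately have "w \<in> colon (Jseq x t) (x (Suc t) * x (Suc t))"
      using ideal_diff[OF ideal_Jseq _ ideal_mult_right[OF ideal_Jseq v]] by (simp add: colon_def)
    also have "\<dots> = colon (Jseq x t) (x (Suc t))"
      by (rule d_sequence_colon_eq[OF ds]) (use t in auto)
    finally have "w * x (Suc t) \<in> Jseq x t" by (simp add: colon_def)
    then show "a \<in> Jseq x t"
      unfolding a_eq using ideal_in_add[OF ideal_Jseq v] by (simp add: mult.commute)
  qed
qed

lemma ideal_Qupto: "ideal_in (Vset s) (Qupto x y s N)"
  unfolding Qupto_def by (rule ideal_in_gen_in[OF is_subring_Vset]) (auto simp: Qdeg_def Qker_def)

lemma Qdeg_subset_Qupto: "k \<le> N \<Longrightarrow> Qdeg x y s k \<subseteq> Qupto x y s N"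
  unfolding Qupto_def using gen_in_subset[of "\<Union>k\<in>{..N}. Qdeg x y s k" "Vset s"] by auto

lemma Qupto_Suc_subset:
  assumes "ideal_in (Vset s) T" "Qupto x y s N \<subseteq> T" "Qdeg x y s (Suc N) \<subseteq> T"
  shows "Qupto x y s (Suc N) \<subseteq> T"
  unfolding Qupto_def
proof (rule gen_in_least[OF assms(1)], rule UN_least)
  fix k assume "k \<in> {..Suc N}"
  then consider "k \<le> N" | "k = Suc N" by fastforce
  then show "Qdeg x y s k \<subseteq> T"
    by cases (use Qdeg_subset_Qupto assms(2,3) in blast)+
qed

lemma ideal_Qker: "ideal_in (Vset s) (Qker x y s)"
  unfolding ideal_in_def Qker_def
  by (auto simp: rees_map_eq_mpoly_eval const_hom.mpoly_eval_add const_hom.mpoly_eval_mult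
      intro: Vset_add Vset_mult)

lemma Qupto_subset_Qker: "Qupto x y s N \<subseteq> Qker x y s"
  unfolding Qupto_def by (rule gen_in_least[OF ideal_Qker]) (auto simp: Qdeg_def)

lemma Qker_subset_if_Qdeg_subset:
  assumes "\<And>n. Qdeg x y s n \<subseteq> T" "ideal_in (Vset s) T"
  shows "Qker x y s \<subseteq> T"
proof
  fix F assume "F \<in> Qker x y s"
  then have F: "F \<in> Vset s" "rees_map x y F = 0" by (auto simp: Qker_def)
  have "homog_comp n F \<in> Qdeg x y s n" for n
    using homog_comp_Vdeg[OF F(1)] rees_eval_homog_comp[OF F(2)] by (simp add: Qdeg_iff)
  then have "homog_comp n F \<in> T" for n
    using assms(1) by blast
  then have "(\<Sum>n\<in>mdeg ` Poly_Mapping.keys F. homog_comp n F) \<in> T"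
    by (rule ideal_in_sum[OF assms(2)])
  then show "F \<in> T" by (simp add: sum_homog_comp)
qed

lemma monomial_mem_X_comb:
  fixes c :: "'a::comm_ring_1"
  assumes km: "Poly_Mapping.keys m \<subseteq> {0..s}" and dm: "mdeg m = n"
    and ne: "m \<noteq> Poly_Mapping.single 0 n"
  shows "Poly_Mapping.single m c \<in> lin_comb var {1..s} (Vdeg s (n - 1))"
proof -
  have "\<exists>l\<in>Poly_Mapping.keys m. l \<noteq> 0"
  proof (rule ccontr)
    assume "\<not> (\<exists>l\<in>Poly_Mapping.keys m. l \<noteq> 0)"
    then have "\<And>k. k \<noteq> 0 \<Longrightarrow> Poly_Mapping.lookup m k = 0" by (metis in_keys_iff)
    then have "m = Poly_Mapping.single 0 (Poly_Mapping.lookup m 0)"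
      by (intro poly_mapping_eqI) (auto simp: lookup_single when_def)
    then show False using ne dm by (metis mdeg_single)
  qed
  then obtain l where l: "l \<in> Poly_Mapping.keys m" "l \<noteq> 0" by blast
  then have l_range: "l \<in> {1..s}" using km by auto
  define m' where "m' = m - Poly_Mapping.single l 1"
  have m_eq: "m = Poly_Mapping.single l 1 + m'"
    unfolding m'_def using l(1)
    by (intro poly_mapping_eqI) (auto simp: lookup_add lookup_minus lookup_single when_def in_keys_iff)
  have "Poly_Mapping.keys m' \<subseteq> Poly_Mapping.keys m"
    unfolding m'_def by (auto simp: in_keys_iff lookup_minus)
  moreover have "mdeg m' = n - 1" using dm m_eq by (simp add: mdeg_add)
  ultimately have m'_Vdeg: "Poly_Mapping.single m' c \<in> Vdeg s (n - 1)"
    using km by (intro Vdeg_single) auto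
  define B where "B = (\<lambda>j. if j = l then Poly_Mapping.single m' c else (0::'a mpoly))"
  have "(\<Sum>j\<in>{1..s}. var j * B j) = var l * Poly_Mapping.single m' c"
    using l_range by (simp add: B_def if_distrib[of "\<lambda>p. var _ * p"] cong: if_cong)
  also have "\<dots> = Poly_Mapping.single m c"
    by (simp add: var_def mult_single m_eq)
  finally show ?thesis
    using lin_comb_mem[of "{1..s}" B "Vdeg s (n - 1)" var] m'_Vdeg by (simp add: B_def)
qed

lemma Vdeg_decompose:
  assumes F: "F \<in> Vdeg s n"
  obtains B where "\<forall>l\<in>{1..s}. B l \<in> Vdeg s (n - 1)"
    "F = Poly_Mapping.single 0 (Poly_Mapping.lookup F (Poly_Mapping.single 0 n)) * Yv ^ n
       + (\<Sum>l\<in>{1..s}. var l * B l)"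
proof -
  let ?e = "Poly_Mapping.single 0 n :: nat \<Rightarrow>\<^sub>0 nat"
  let ?c = "Poly_Mapping.lookup F ?e"
  let ?R = "\<Sum>m\<in>Poly_Mapping.keys F - {?e}. Poly_Mapping.single m (Poly_Mapping.lookup F m)"
  have split: "F = Poly_Mapping.single ?e ?c + ?R"
  proof (cases "?e \<in> Poly_Mapping.keys F")
    case True
    then show ?thesis
      by (subst poly_mapping_eq_sum_single) (simp add: sum.remove[OF finite_keys True])
  next
    case False
    then show ?thesis by (subst poly_mapping_eq_sum_single) (simp add: in_keys_iff)
  qed
  have "?R \<in> lin_comb var {1..s} (Vdeg s (n - 1))"
  proof (rule lin_comb_sum)
    fix m assume "m \<in> Poly_Mapping.keys F - {?e}"
    then show "Poly_Mapping.single m (Poly_Mapping.lookup F m) \<in> lin_comb var {1..s} (Vdeg s (n - 1))"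
      using F by (intro monomial_mem_X_comb) (auto simp: Vdeg_def Vset_def homogeneous_def)
  qed (auto intro: Vdeg_add)
  then obtain B where "?R = (\<Sum>l\<in>{1..s}. var l * B l)" "\<forall>l\<in>{1..s}. B l \<in> Vdeg s (n - 1)"
    by (rule lin_comb_E)
  moreover have "Poly_Mapping.single ?e ?c = Poly_Mapping.single 0 ?c * Yv ^ n"
    by (simp add: Yv_pow mult_single)
  ultimately show ?thesis using split that by metis
qed

lemma Vdeg_reduce_by_form:
  assumes F: "F \<in> Vdeg s n" and n: "r + 1 \<le> n" and Fs: "\<forall>i\<in>{1..s}. Fs i \<in> Vdeg s r"
  obtains P B where "P \<in> Vdeg s (n - (r + 1))" "\<forall>l\<in>{1..s}. B l \<in> Vdeg s (n - 1)"
    "F = P * (Yv ^ (r + 1) - (\<Sum>i=1..s. Xv i * Fs i)) + (\<Sum>l\<in>{1..s}. var l * B l)"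
proof -
  define c where "c = Poly_Mapping.single (0 :: nat \<Rightarrow>\<^sub>0 nat) (Poly_Mapping.lookup F (Poly_Mapping.single 0 n))"
  obtain B where B: "\<forall>l\<in>{1..s}. B l \<in> Vdeg s (n - 1)"
    and F_eq: "F = c * Yv ^ n + (\<Sum>l\<in>{1..s}. var l * B l)"
    unfolding c_def by (rule Vdeg_decompose[OF F])
  define P where "P = c * Yv ^ (n - (r + 1))"
  have P: "P \<in> Vdeg s (n - (r + 1))"
    unfolding P_def c_def using Vdeg_mult[OF const_Vdeg Yv_pow_Vdeg] by simp
  have "Yv ^ n = Yv ^ (n - (r + 1)) * (Yv::'a mpoly) ^ (r + 1)"
    by (simp only: power_add[symmetric] le_add_diff_inverse2[OF n])
  then have "c * Yv ^ n = P * Yv ^ (r + 1)"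
    unfolding P_def by (simp add: mult.assoc)
  moreover have "(\<Sum>l\<in>{1..s}. var l * (B l + P * Fs l)) =
      (\<Sum>l\<in>{1..s}. var l * B l) + P * (\<Sum>i=1..s. Xv i * Fs i)"
    by (simp add: distrib_left sum.distrib sum_distrib_left mult.left_commute)
  ultimately have "F = P * (Yv ^ (r + 1) - (\<Sum>i=1..s. Xv i * Fs i)) + (\<Sum>l\<in>{1..s}. var l * (B l + P * Fs l))"
    unfolding F_eq by (simp add: right_diff_distrib)
  moreover have "\<forall>l\<in>{1..s}. B l + P * Fs l \<in> Vdeg s (n - 1)"
  proof
    fix l assume l: "l \<in> {1..s}"
    have "P * Fs l \<in> Vdeg s (n - (r + 1) + r)" using Vdeg_mult[OF P] Fs l by blast
    then show "B l + P * Fs l \<in> Vdeg s (n - 1)" using B l n by (auto intro: Vdeg_add)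
  qed
  ultimately show thesis by (intro that[OF P])
qed

locale rees_setting =
  fixes x :: "nat \<Rightarrow> 'a::comm_ring_1" and y :: 'a and s :: nat and I :: "'a set"
  assumes I_gen: "I = gen (insert y (x ` {1..s}))"
begin

abbreviation "J \<equiv> Jseq x s"

lemma ideal_I: "ideal I"
  unfolding I_gen by (rule ideal_gen)

lemma rees_point_mem_I: "i \<le> s \<Longrightarrow> rees_point x y i \<in> I"
  unfolding I_gen using gen_in_subset[of "insert y (x ` {1..s})" UNIV] by auto

lemma y_mem_I: "y \<in> I"
  using rees_point_mem_I[of 0] by simp

lemma x_mem_I: "l \<in> {1..s} \<Longrightarrow> x l \<in> I"
  using rees_point_mem_I[of l] by simp

lemma Jseq_subset_I: "k \<le> s \<Longrightarrow> Jseq x k \<subseteq> I"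
  unfolding Jseq_def by (rule gen_in_least[OF ideal_I]) (use x_mem_I in auto)

lemma Jseq_mult_pow_subset:
  assumes "k \<le> s"
  shows "ideal_mult (Jseq x k) (ideal_pow I m) \<subseteq> ideal_pow I (Suc m)"
proof
  fix u assume "u \<in> ideal_mult (Jseq x k) (ideal_pow I m)"
  then obtain b where u: "u = (\<Sum>l\<in>{1..k}. x l * b l)" and b: "\<forall>l\<in>{1..k}. b l \<in> ideal_pow I m"
    unfolding Jseq_mult_eq_lin_comb[OF ideal_ideal_pow] by (rule lin_comb_E)
  show "u \<in> ideal_pow I (Suc m)"
    unfolding u ideal_pow.simps
    by (intro ideal_in_sum[OF ideal_mult_ideal] ideal_mult_mem x_mem_I) (use assms b in auto)
qed

lemma prod_power_mem_ideal_pow: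
  "finite K \<Longrightarrow> K \<subseteq> {0..s} \<Longrightarrow> (\<Prod>i\<in>K. rees_point x y i ^ f i) \<in> ideal_pow I (\<Sum>i\<in>K. f i)"
proof (induction K rule: finite_induct)
  case (insert i K)
  then have "rees_point x y i ^ f i * (\<Prod>i\<in>K. rees_point x y i ^ f i) \<in> ideal_pow I (f i + (\<Sum>i\<in>K. f i))"
    by (intro ideal_pow_mult_mem[OF ideal_I] power_mem_ideal_pow[OF ideal_I] rees_point_mem_I) auto
  then show ?case using insert.hyps by simp
qed simp

lemma rees_eval_mem_ideal_pow: "F \<in> Vdeg s n \<Longrightarrow> rees_eval x y F \<in> ideal_pow I n"
  unfolding rees_eval_def mpoly_eval_def
proof (rule ideal_in_sum[OF ideal_ideal_pow], rule ideal_mult_left[OF ideal_ideal_pow])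
  fix m assume "F \<in> Vdeg s n" "m \<in> Poly_Mapping.keys F"
  then have "Poly_Mapping.keys m \<subseteq> {0..s}" "mdeg m = n"
    by (auto simp: Vdeg_def Vset_def homogeneous_def)
  then show "mono_eval (rees_point x y) m \<in> ideal_pow I n"
    using prod_power_mem_ideal_pow[of "Poly_Mapping.keys m" "Poly_Mapping.lookup m"]
    by (simp add: mono_eval_def mdeg_def)
qed

lemma ideal_rees_eval_Vdeg: "ideal (rees_eval x y ` Vdeg s n)"
  unfolding ideal_in_def
proof (intro conjI ballI)
  have "rees_eval x y 0 = 0" by (simp add: rees_eval_def)
  then show "0 \<in> rees_eval x y ` Vdeg s n"
    using Vdeg_0[of s n] by (metis image_eqI)
next
  fix a b assume "a \<in> rees_eval x y ` Vdeg s n" "b \<in> rees_eval x y ` Vdeg s n"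
  then show "a + b \<in> rees_eval x y ` Vdeg s n"
    by (auto simp: rees_eval_add[symmetric] intro: Vdeg_add)
next
  fix c a assume "a \<in> rees_eval x y ` Vdeg s n"
  then obtain F where F: "F \<in> Vdeg s n" "a = rees_eval x y F" by blast
  have "Poly_Mapping.single 0 c * F \<in> Vdeg s n" using Vdeg_mult[OF const_Vdeg F(1)] by simp
  moreover have "c * a = rees_eval x y (Poly_Mapping.single 0 c * F)"
    using F by (simp add: rees_eval_mult rees_eval_const)
  ultimately show "c * a \<in> rees_eval x y ` Vdeg s n" by blast
qed simp

lemma ideal_pow_eq_rees_eval_Vdeg: "ideal_pow I n = rees_eval x y ` Vdeg s n"
proof
  show "rees_eval x y ` Vdeg s n \<subseteq> ideal_pow I n" using rees_eval_mem_ideal_pow by blast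
  show "ideal_pow I n \<subseteq> rees_eval x y ` Vdeg s n"
  proof (induction n)
    case 0
    show ?case using const_Vdeg by (force simp: rees_eval_const)
  next
    case (Suc n)
    have "I \<subseteq> rees_eval x y ` Vdeg s 1"
      unfolding I_gen
    proof (rule gen_in_least[OF ideal_rees_eval_Vdeg], rule subsetI)
      fix a assume "a \<in> insert y (x ` {1..s})"
      then obtain i where "i \<le> s" "a = rees_point x y i"
      proof (elim insertE)
        assume "a = y"
        then show thesis using that[of 0] by simp
      qed auto
      then show "a \<in> rees_eval x y ` Vdeg s 1"
        using var_Vdeg[of i s] by (metis image_eqI rees_eval_var)
    qed
    show ?case
      unfolding ideal_pow.simps ideal_mult_def
    proof (rule gen_in_least[OF ideal_rees_eval_Vdeg], rule subsetI)
      fix w assume "w \<in> {a * b |a b. a \<in> I \<and> b \<in> ideal_pow I n}"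
      then obtain A B where A: "A \<in> Vdeg s 1" and B: "B \<in> Vdeg s n"
        and w: "w = rees_eval x y A * rees_eval x y B"
        using \<open>I \<subseteq> rees_eval x y ` Vdeg s 1\<close> Suc.IH by blast
      have "A * B \<in> Vdeg s (Suc n)" using Vdeg_mult[OF A B] by simp
      then show "w \<in> rees_eval x y ` Vdeg s (Suc n)"
        unfolding w rees_eval_mult[symmetric] by (rule imageI)
    qed
  qed
qed

lemma lin_comb_pow_E:
  assumes "a \<in> lin_comb x {1..k} (ideal_pow I n)"
  obtains C where "\<forall>l\<in>{1..k}. C l \<in> Vdeg s n" "rees_eval x y (\<Sum>l\<in>{1..k}. var l * C l) = a"
proof -
  obtain c where a: "a = (\<Sum>l\<in>{1..k}. x l * c l)" and c: "\<forall>l\<in>{1..k}. c l \<in> ideal_pow I n"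
    using assms by (rule lin_comb_E)
  have "\<forall>l\<in>{1..k}. \<exists>C. C \<in> Vdeg s n \<and> rees_eval x y C = c l"
    using c unfolding ideal_pow_eq_rees_eval_Vdeg by (force simp: image_iff)
  then obtain C where C: "\<forall>l\<in>{1..k}. C l \<in> Vdeg s n \<and> rees_eval x y (C l) = c l"
    by metis
  then have "rees_eval x y (\<Sum>l\<in>{1..k}. var l * C l) = a"
    unfolding a by (simp add: rees_eval_X_comb)
  with C show thesis using that by blast
qed

lemma ideal_pow_Suc_eq_J_mult_if_y_power:
  assumes y: "y ^ Suc k \<in> lin_comb x {1..s} (ideal_pow I k)"
  shows "ideal_pow I (Suc k) = ideal_mult J (ideal_pow I k)"
proof
  show "ideal_mult J (ideal_pow I k) \<subseteq> ideal_pow I (Suc k)"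
    by (rule Jseq_mult_pow_subset) simp
  let ?L = "lin_comb x {1..s} (ideal_pow I k)"
  have L: "ideal ?L" by (rule ideal_lin_comb[OF ideal_ideal_pow])
  have "u \<in> ?L" if u: "u \<in> ideal_pow I (Suc k)" for u
  proof -
    obtain H where H: "H \<in> Vdeg s (Suc k)" "rees_eval x y H = u"
      using u unfolding ideal_pow_eq_rees_eval_Vdeg by blast
    let ?c = "Poly_Mapping.lookup H (Poly_Mapping.single 0 (Suc k))"
    obtain B where B: "\<forall>l\<in>{1..s}. B l \<in> Vdeg s k"
      and H_eq: "H = Poly_Mapping.single 0 ?c * Yv ^ Suc k + (\<Sum>l\<in>{1..s}. var l * B l)"
      using Vdeg_decompose[OF H(1)] by auto
    have X: "rees_eval x y (\<Sum>l\<in>{1..s}. var l * B l) = (\<Sum>l\<in>{1..s}. x l * rees_eval x y (B l))"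
      by (simp add: rees_eval_X_comb)
    have "u = ?c * y ^ Suc k + (\<Sum>l\<in>{1..s}. x l * rees_eval x y (B l))"
      unfolding H(2)[symmetric] by (subst H_eq) (simp only: rees_eval_add rees_eval_const_Yv_pow X)
    moreover have "(\<Sum>l\<in>{1..s}. x l * rees_eval x y (B l)) \<in> ?L"
      by (rule lin_comb_mem) (use B rees_eval_mem_ideal_pow in auto)
    ultimately show ?thesis
      using ideal_in_add[OF L] ideal_mult_left[OF L y] by simp
  qed
  then show "ideal_pow I (Suc k) \<subseteq> ideal_mult J (ideal_pow I k)"
    unfolding Jseq_mult_eq_lin_comb[OF ideal_ideal_pow] by blast
qed

definition colon_condition :: "nat \<Rightarrow> bool" where
  "colon_condition n \<longleftrightarrow> (\<forall>k\<in>{1..s}. \<forall>a\<in>ideal_pow I (n - 1).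
      x k * a \<in> Jseq x (k - 1) \<longrightarrow> a \<in> ideal_mult (Jseq x (k - 1)) (ideal_pow I (n - 2)))"

lemma last_X_coeff_reduce:
  assumes n: "2 \<le> n" and cond: "colon_condition n" and k: "Suc k \<le> s"
    and B: "\<forall>l\<in>{1..Suc k}. B l \<in> Vdeg s (n - 1)"
    and syz: "rees_eval x y (\<Sum>l\<in>{1..Suc k}. var l * B l) = 0"
  obtains C where "\<forall>l\<in>{1..k}. C l \<in> Vdeg s (n - 2)"
    "B (Suc k) - (\<Sum>l\<in>{1..k}. var l * C l) \<in> Qdeg x y s (n - 1)"
proof -
  let ?S = "\<Sum>l\<in>{1..k}. x l * rees_eval x y (B l)"
  have "?S + x (Suc k) * rees_eval x y (B (Suc k)) = 0"
    using syz by (simp add: rees_eval_add rees_eval_mult rees_eval_var rees_eval_X_comb)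
  then have "x (Suc k) * rees_eval x y (B (Suc k)) = - ?S"
    by (simp add: eq_neg_iff_add_eq_0 add.commute)
  moreover have "?S \<in> Jseq x k"
    using lin_comb_subset_Jseq[of x k UNIV] lin_comb_mem[of "{1..k}" "\<lambda>l. rees_eval x y (B l)" UNIV x]
    by blast
  ultimately have "x (Suc k) * rees_eval x y (B (Suc k)) \<in> Jseq x k"
    using ideal_uminus[OF ideal_Jseq] by simp
  moreover have Bk: "B (Suc k) \<in> Vdeg s (n - 1)" using B by simp
  ultimately have "rees_eval x y (B (Suc k)) \<in> ideal_mult (Jseq x k) (ideal_pow I (n - 2))"
    using cond[unfolded colon_condition_def, rule_format, of "Suc k"] k rees_eval_mem_ideal_pow
    by simp
  then obtain C where C: "\<forall>l\<in>{1..k}. C l \<in> Vdeg s (n - 2)"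
    and C_eval: "rees_eval x y (\<Sum>l\<in>{1..k}. var l * C l) = rees_eval x y (B (Suc k))"
    unfolding Jseq_mult_eq_lin_comb[OF ideal_ideal_pow] by (rule lin_comb_pow_E)
  have "B (Suc k) - (\<Sum>l\<in>{1..k}. var l * C l) \<in> Vdeg s (n - 1)"
    using C k n by (intro Vdeg_diff[OF Bk] Vdeg_sum var_mult_Vdeg_diff_2) auto
  with C C_eval show thesis
    using that by (simp add: Qdeg_iff rees_eval_diff)
qed

text \<open>The colon condition rewrites the last coefficient, modulo Q_(n-1), as a combination of
  the preceding variables X_l; this shortens the syzygy by one term.\<close>
lemma X_syzygy_mem:
  assumes n: "2 \<le> n" and cond: "colon_condition n"
    and T: "ideal_in (Vset s) T" "Qdeg x y s (n - 1) \<subseteq> T"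
  shows "k \<le> s \<Longrightarrow> \<forall>l\<in>{1..k}. B l \<in> Vdeg s (n - 1) \<Longrightarrow>
    rees_eval x y (\<Sum>l\<in>{1..k}. var l * B l) = 0 \<Longrightarrow> (\<Sum>l\<in>{1..k}. var l * B l) \<in> T"
proof (induction k arbitrary: B)
  case 0
  then show ?case using ideal_in_0[OF T(1)] by simp
next
  case (Suc k)
  obtain C where C: "\<forall>l\<in>{1..k}. C l \<in> Vdeg s (n - 2)"
    and A: "B (Suc k) - (\<Sum>l\<in>{1..k}. var l * C l) \<in> Qdeg x y s (n - 1)"
    by (rule last_X_coeff_reduce[OF n cond Suc.prems])
  define A where "A = B (Suc k) - (\<Sum>l\<in>{1..k}. var l * C l)"
  define B' where "B' l = B l + var (Suc k) * C l" for l
  have "(\<Sum>l\<in>{1..k}. var l * B' l) =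
      (\<Sum>l\<in>{1..k}. var l * B l) + var (Suc k) * (\<Sum>l\<in>{1..k}. var l * C l)"
    unfolding B'_def by (simp add: distrib_left sum.distrib sum_distrib_left mult.left_commute)
  then have sum_eq: "(\<Sum>l\<in>{1..Suc k}. var l * B l) = var (Suc k) * A + (\<Sum>l\<in>{1..k}. var l * B' l)"
    unfolding A_def by (simp add: right_diff_distrib)
  have "var (Suc k) * A \<in> T"
    using ideal_in_mult[OF T(1) Vdeg_Vset[OF var_Vdeg]] A T(2) Suc.prems(1) unfolding A_def by blast
  moreover have "(\<Sum>l\<in>{1..k}. var l * B' l) \<in> T"
  proof (rule Suc.IH)
    show "k \<le> s" using Suc.prems(1) by simp
    show "\<forall>l\<in>{1..k}. B' l \<in> Vdeg s (n - 1)"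
    proof
      fix l assume l: "l \<in> {1..k}"
      have "var (Suc k) * C l \<in> Vdeg s (n - 1)"
        using Suc.prems(1) n C l by (intro var_mult_Vdeg_diff_2) auto
      then show "B' l \<in> Vdeg s (n - 1)"
        using Suc.prems(2) l by (simp add: B'_def Vdeg_add)
    qed
    show "rees_eval x y (\<Sum>l\<in>{1..k}. var l * B' l) = 0"
      using Suc.prems(3) A unfolding sum_eq A_def by (simp add: Qdeg_iff rees_eval_add rees_eval_mult)
  qed
  ultimately show ?case unfolding sum_eq by (rule ideal_in_add[OF T(1)])
qed

lemma Qdeg_subset_by_reduction_form:
  assumes n: "r + 1 \<le> n" "2 \<le> n" and cond: "colon_condition n"
    and T: "ideal_in (Vset s) T" "Qdeg x y s (n - 1) \<subseteq> T"
    and Fs: "\<forall>i\<in>{1..s}. Fs i \<in> Vdeg s r"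
    and G: "Yv ^ (r + 1) - (\<Sum>i=1..s. Xv i * Fs i) \<in> Qdeg x y s (r + 1) \<inter> T"
  shows "Qdeg x y s n \<subseteq> T"
proof
  let ?G = "Yv ^ (r + 1) - (\<Sum>i=1..s. Xv i * Fs i)"
  fix F assume "F \<in> Qdeg x y s n"
  then have F: "F \<in> Vdeg s n" "rees_eval x y F = 0" by (auto simp: Qdeg_iff)
  obtain P B where P: "P \<in> Vdeg s (n - (r + 1))" and B: "\<forall>l\<in>{1..s}. B l \<in> Vdeg s (n - 1)"
    and F_eq: "F = P * ?G + (\<Sum>l\<in>{1..s}. var l * B l)"
    by (rule Vdeg_reduce_by_form[OF F(1) n(1) Fs])
  have "P * ?G \<in> T"
    using ideal_in_mult[OF T(1) Vdeg_Vset[OF P]] G by blast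
  moreover have "(\<Sum>l\<in>{1..s}. var l * B l) \<in> T"
    using X_syzygy_mem[OF n(2) cond T, of s B] B F(2) G F_eq
    by (simp add: Qdeg_iff rees_eval_add rees_eval_mult)
  ultimately show "F \<in> T" unfolding F_eq by (rule ideal_in_add[OF T(1)])
qed

end

locale reduction_setting = rees_setting x y s I for x :: "nat \<Rightarrow> 'a::comm_ring_1" and y s I +
  fixes r :: nat
  assumes red: "is_reduction (Jseq x s) I" and r_def: "r = red_num (Jseq x s) I"
begin

lemma ideal_pow_Suc_red_num: "ideal_pow I (Suc r) = ideal_mult J (ideal_pow I r)"
proof -
  from red obtain m where "ideal_pow I (Suc m) = ideal_mult J (ideal_pow I m)"
    unfolding is_reduction_def by blast
  then show ?thesis unfolding r_def red_num_def by (rule LeastI)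
qed

lemma red_num_le: "ideal_pow I (Suc k) = ideal_mult J (ideal_pow I k) \<Longrightarrow> r \<le> k"
  unfolding r_def red_num_def by (rule Least_le)

lemma ideal_pow_Suc_eq_J_mult: "r \<le> m \<Longrightarrow> ideal_pow I (Suc m) = ideal_mult J (ideal_pow I m)"
proof (induction m rule: dec_induct)
  case base
  show ?case by (rule ideal_pow_Suc_red_num)
next
  case (step m)
  show ?case
  proof
    show "ideal_mult J (ideal_pow I (Suc m)) \<subseteq> ideal_pow I (Suc (Suc m))"
      by (rule Jseq_mult_pow_subset) simp
    show "ideal_pow I (Suc (Suc m)) \<subseteq> ideal_mult J (ideal_pow I (Suc m))"
      unfolding Jseq_mult_eq_lin_comb[OF ideal_ideal_pow] ideal_pow.simps(2)[of I "Suc m"] ideal_mult_def[of I]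
    proof (rule gen_in_least[OF ideal_lin_comb[OF ideal_ideal_pow]], rule subsetI)
      fix w assume "w \<in> {p * q |p q. p \<in> I \<and> q \<in> ideal_pow I (Suc m)}"
      then obtain p q where w: "w = p * q" and p: "p \<in> I" and q: "q \<in> ideal_pow I (Suc m)" by blast
      obtain b where q_eq: "q = (\<Sum>l\<in>{1..s}. x l * b l)" and b: "\<forall>l\<in>{1..s}. b l \<in> ideal_pow I m"
        using q unfolding step.IH Jseq_mult_eq_lin_comb[OF ideal_ideal_pow] by (rule lin_comb_E)
      have "w = (\<Sum>l\<in>{1..s}. x l * (p * b l))"
        unfolding w q_eq by (simp add: sum_distrib_left mult.left_commute)
      then show "w \<in> lin_comb x {1..s} (ideal_pow I (Suc m))"
        using lin_comb_mem[of "{1..s}" "\<lambda>l. p * b l" "ideal_pow I (Suc m)" x] p b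
        by (simp add: ideal_mult_mem)
    qed
  qed
qed

lemma ideal_pow_subset_J: "r < m \<Longrightarrow> ideal_pow I m \<subseteq> J"
  using ideal_pow_Suc_eq_J_mult[of "m - 1"] lin_comb_subset_Jseq
  by (simp add: Jseq_mult_eq_lin_comb[OF ideal_ideal_pow])

lemma red_num_pos:
  assumes mu: "mu I = s + 1"
  shows "1 \<le> r"
proof (rule ccontr)
  assume "\<not> 1 \<le> r"
  then have "r = 0" by simp
  then have "I = ideal_mult J UNIV"
    using ideal_pow_Suc_red_num ideal_pow_1[OF ideal_I] by simp
  also have "\<dots> \<subseteq> J"
    unfolding Jseq_mult_eq_lin_comb[OF ideal_UNIV] by (rule lin_comb_subset_Jseq)
  finally have "I = gen (x ` {1..s})" using Jseq_subset_I unfolding Jseq_def by auto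
  also have "x ` {1..s} = (\<lambda>i. x (Suc i)) ` {..<s}"
    by (simp add: image_image[of x Suc, symmetric] image_Suc_lessThan)
  finally have "\<exists>g. I = gen (g ` {..<s})" by (rule exI[of _ "\<lambda>i. x (Suc i)"])
  then have "mu I \<le> s" unfolding mu_def by (rule Least_le)
  with mu show False by simp
qed

lemma reduction_form_exists:
  obtains Fs where "\<forall>i\<in>{1..s}. Fs i \<in> Vdeg s r"
    "Yv ^ (r + 1) - (\<Sum>i=1..s. Xv i * Fs i) \<in> Qdeg x y s (r + 1)"
proof -
  have "y ^ Suc r \<in> lin_comb x {1..s} (ideal_pow I r)"
    using power_mem_ideal_pow[OF ideal_I y_mem_I, of "Suc r"] ideal_pow_Suc_red_num
    by (simp add: Jseq_mult_eq_lin_comb[OF ideal_ideal_pow])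
  then obtain Fs where Fs: "\<forall>l\<in>{1..s}. Fs l \<in> Vdeg s r"
    and Fs_eval: "rees_eval x y (\<Sum>l\<in>{1..s}. var l * Fs l) = y ^ Suc r"
    by (rule lin_comb_pow_E)
  have "var l * Fs l \<in> Vdeg s (r + 1)" if "l \<in> {1..s}" for l
    using Vdeg_mult[OF var_Vdeg Fs[rule_format, OF that]] that by simp
  then have "Yv ^ (r + 1) - (\<Sum>i=1..s. Xv i * Fs i) \<in> Vdeg s (r + 1)"
    by (intro Vdeg_diff[OF Yv_pow_Vdeg] Vdeg_sum)
  moreover have "rees_eval x y (Yv ^ (r + 1)) = y ^ Suc r"
    using rees_eval_const_Yv_pow[of x y 1 "r + 1"] by simp
  ultimately show thesis
    using that Fs Fs_eval by (simp add: Qdeg_iff rees_eval_diff)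
qed

section \<open>Upper bound for the relation type\<close>

lemma Jseq_Suc_descend:
  assumes ds: "d_sequence x s" and m: "r < m"
    and IH: "\<And>i. i \<le> s \<Longrightarrow> Jseq x i \<inter> ideal_pow I m \<subseteq> ideal_mult (Jseq x i) (ideal_pow I (m - 1))"
    and t: "t < s" and u: "u \<in> Jseq x t" "u \<in> lin_comb x {1..Suc t} (ideal_pow I m)"
  shows "u \<in> lin_comb x {1..t} (ideal_pow I m)"
proof -
  obtain v b where u_eq: "u = v + x (Suc t) * b"
    and v: "v \<in> lin_comb x {1..t} (ideal_pow I m)" and b: "b \<in> ideal_pow I m"
    using u(2) unfolding lin_comb_Suc by blast
  have "x (Suc t) * b \<in> Jseq x t"
    using ideal_diff[OF ideal_Jseq u(1) subsetD[OF lin_comb_subset_Jseq v]] u_eq by simp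
  moreover have "b \<in> J" using ideal_pow_subset_J[OF m] b by blast
  ultimately have "b \<in> Jseq x t"
    using d_sequence_mem_Jseq[OF ds, of "Suc t" b] t by simp
  then have "b \<in> lin_comb x {1..t} (ideal_pow I (m - 1))"
    using IH[of t] b t by (auto simp: Jseq_mult_eq_lin_comb[OF ideal_ideal_pow])
  then obtain c where b_eq: "b = (\<Sum>l\<in>{1..t}. x l * c l)"
    and c: "\<forall>l\<in>{1..t}. c l \<in> ideal_pow I (m - 1)"
    by (rule lin_comb_E)
  have "ideal_pow I m = ideal_mult I (ideal_pow I (m - 1))"
    using m by (cases m) auto
  then have "x (Suc t) * c l \<in> ideal_pow I m" if "l \<in> {1..t}" for l
    using ideal_mult_mem[OF x_mem_I c[rule_format, OF that], of "Suc t"] t by simp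
  then have "(\<Sum>l\<in>{1..t}. x l * (x (Suc t) * c l)) \<in> lin_comb x {1..t} (ideal_pow I m)"
    by (rule lin_comb_mem)
  moreover have "x (Suc t) * b = (\<Sum>l\<in>{1..t}. x l * (x (Suc t) * c l))"
    unfolding b_eq by (simp add: sum_distrib_left mult.left_commute)
  ultimately have xb: "x (Suc t) * b \<in> lin_comb x {1..t} (ideal_pow I m)" by simp
  show ?thesis
    unfolding u_eq by (intro lin_comb_add[OF _ v xb] ideal_in_add[OF ideal_ideal_pow])
qed

lemma Jseq_inter_pow_subset:
  assumes ds: "d_sequence x s"
    and b: "\<forall>i\<in>{1..s-1}. Jseq x i \<inter> ideal_pow I (r + 1) = ideal_mult (Jseq x i) (ideal_pow I r)"
    and m: "Suc r \<le> m" and i: "i \<le> s"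
  shows "Jseq x i \<inter> ideal_pow I m \<subseteq> ideal_mult (Jseq x i) (ideal_pow I (m - 1))"
  using m i
proof (induction m arbitrary: i rule: dec_induct)
  case base
  consider "i = 0" | "i = s" | "i \<in> {1..s-1}" using base by fastforce
  then show ?case
    by cases (use ideal_in_0[OF ideal_mult_ideal] ideal_pow_Suc_red_num b in \<open>auto simp: Jseq_0\<close>)
next
  case (step m)
  show ?case
  proof
    fix u assume u: "u \<in> Jseq x i \<inter> ideal_pow I (Suc m)"
    have "u \<in> lin_comb x {1..i} (ideal_pow I m)"
    proof (rule inc_induct[of i s "\<lambda>t. u \<in> lin_comb x {1..t} (ideal_pow I m)"])
      show "i \<le> s" by (rule step.prems)
      show "u \<in> lin_comb x {1..s} (ideal_pow I m)"
        using u ideal_pow_Suc_eq_J_mult[of m] step.hyps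
        by (simp add: Jseq_mult_eq_lin_comb[OF ideal_ideal_pow])
    next
      fix t assume "i \<le> t" "t < s" "u \<in> lin_comb x {1..Suc t} (ideal_pow I m)"
      then show "u \<in> lin_comb x {1..t} (ideal_pow I m)"
        using Jseq_Suc_descend[OF ds _ step.IH] Jseq_mono[of i t x] u step.hyps by auto
    qed
    then show "u \<in> ideal_mult (Jseq x i) (ideal_pow I (Suc m - 1))"
      by (simp add: Jseq_mult_eq_lin_comb[OF ideal_ideal_pow])
  qed
qed

lemma colon_condition_d_sequence:
  assumes ds: "d_sequence x s"
    and b: "\<forall>i\<in>{1..s-1}. Jseq x i \<inter> ideal_pow I (r + 1) = ideal_mult (Jseq x i) (ideal_pow I r)"
    and n: "r + 2 \<le> n"
  shows "colon_condition n"
  unfolding colon_condition_def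
proof (intro ballI impI)
  fix k a assume k: "k \<in> {1..s}" and a: "a \<in> ideal_pow I (n - 1)" and xa: "x k * a \<in> Jseq x (k - 1)"
  have "r < n - 1" using n by simp
  then have "a \<in> J" using ideal_pow_subset_J a by blast
  then have "a \<in> Jseq x (k - 1)" by (rule d_sequence_mem_Jseq[OF ds k _ xa])
  moreover have "Jseq x (k - 1) \<inter> ideal_pow I (n - 1) \<subseteq> ideal_mult (Jseq x (k - 1)) (ideal_pow I (n - 1 - 1))"
    using n k by (intro Jseq_inter_pow_subset[OF ds b]) auto
  moreover have "n - 1 - 1 = n - 2" by simp
  ultimately show "a \<in> ideal_mult (Jseq x (k - 1)) (ideal_pow I (n - 2))"
    using a by auto
qed

lemma Qdeg_subset_Qupto_Suc_red_num:
  assumes ds: "d_sequence x s"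
    and b: "\<forall>i\<in>{1..s-1}. Jseq x i \<inter> ideal_pow I (r + 1) = ideal_mult (Jseq x i) (ideal_pow I r)"
  shows "Qdeg x y s n \<subseteq> Qupto x y s (r + 1)"
proof (induction n rule: less_induct)
  case (less n)
  show ?case
  proof (cases "n \<le> r + 1")
    case True
    then show ?thesis by (rule Qdeg_subset_Qupto)
  next
    case False
    obtain Fs where Fs: "\<forall>i\<in>{1..s}. Fs i \<in> Vdeg s r"
      and G: "Yv ^ (r + 1) - (\<Sum>i=1..s. Xv i * Fs i) \<in> Qdeg x y s (r + 1)"
      by (rule reduction_form_exists)
    show ?thesis
    proof (rule Qdeg_subset_by_reduction_form[OF _ _ _ ideal_Qupto _ Fs])
      show "colon_condition n" using colon_condition_d_sequence[OF ds b] False by simp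
      show "Qdeg x y s (n - 1) \<subseteq> Qupto x y s (r + 1)" using less.IH False by simp
      show "Yv ^ (r + 1) - (\<Sum>i=1..s. Xv i * Fs i) \<in> Qdeg x y s (r + 1) \<inter> Qupto x y s (r + 1)"
        using G Qdeg_subset_Qupto[of "r + 1" "r + 1"] by blast
    qed (use False in auto)
  qed
qed

lemma Qker_eq_Qupto_Suc_red_num:
  assumes ds: "d_sequence x s"
    and b: "\<forall>i\<in>{1..s-1}. Jseq x i \<inter> ideal_pow I (r + 1) = ideal_mult (Jseq x i) (ideal_pow I r)"
  shows "Qker x y s = Qupto x y s (r + 1)"
  using Qker_subset_if_Qdeg_subset[OF Qdeg_subset_Qupto_Suc_red_num[OF ds b] ideal_Qupto]
    Qupto_subset_Qker by blast

end

section \<open>Lower bound for the relation type\<close>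

lemma unit_if_notin_local_ring:
  assumes loc: "local_ring m" and c: "c \<notin> m"
  obtains d where "d * c = 1"
proof -
  have "gen {c} = UNIV"
  proof (rule ccontr)
    assume "gen {c} \<noteq> UNIV"
    then have "gen {c} \<subseteq> m" using loc ideal_gen unfolding local_ring_def by blast
    moreover have "c \<in> gen {c}" using gen_in_subset[of "{c}" UNIV] by blast
    ultimately show False using c by blast
  qed
  then have "1 \<in> lin_comb (\<lambda>_. c) {0::nat} UNIV"
    using gen_image_eq_lin_comb[of "{0::nat}" "\<lambda>_. c"] by simp
  then obtain b where "1 = (\<Sum>l\<in>{0::nat}. c * b l)" by (rule lin_comb_E)
  then show thesis using that[of "b 0"] by (simp add: mult.commute)
qed

lemma one_notin_local_ring: "local_ring m \<Longrightarrow> 1 \<notin> m"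
  using ideal_mult_left[of m 1] unfolding local_ring_def by auto

definition Y_coeffs_in :: "nat \<Rightarrow> 'a::comm_ring_1 set \<Rightarrow> 'a mpoly set" where
  "Y_coeffs_in s m = {H \<in> Vset s. \<forall>i. coeff (Y_part H) i \<in> m}"

lemma ideal_Y_coeffs_in:
  assumes m: "ideal m"
  shows "ideal_in (Vset s) (Y_coeffs_in s m)"
  unfolding ideal_in_def
proof (intro conjI ballI)
  show "Y_coeffs_in s m \<subseteq> Vset s" by (auto simp: Y_coeffs_in_def)
  show "0 \<in> Y_coeffs_in s m" using ideal_in_0[OF m] by (simp add: Y_coeffs_in_def Y_part_def)
next
  fix a b assume "a \<in> Y_coeffs_in s m" "b \<in> Y_coeffs_in s m"
  then show "a + b \<in> Y_coeffs_in s m"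
    using ideal_in_add[OF m] by (auto simp: Y_coeffs_in_def Y_part_add Vset_add)
next
  fix c a :: "'a mpoly" assume c: "c \<in> Vset s" and a: "a \<in> Y_coeffs_in s m"
  have "coeff (Y_part (c * a)) i \<in> m" for i
    unfolding Y_part_mult coeff_mult
    by (rule ideal_in_sum[OF m], rule ideal_mult_left[OF m]) (use a in \<open>auto simp: Y_coeffs_in_def\<close>)
  then show "c * a \<in> Y_coeffs_in s m" using c a by (auto simp: Y_coeffs_in_def Vset_mult)
qed

lemma reduction_form_notin_Y_coeffs_in:
  assumes "local_ring m"
  shows "Yv ^ (r + 1) - (\<Sum>i=1..s. Xv i * F i) \<notin> Y_coeffs_in s m"
proof -
  have "Y_part (Yv ^ (r + 1) - (\<Sum>i=1..s. Xv i * F i)) = monom 1 (r + 1)"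
    using Y_part_const_Yv_pow[of 1 "r + 1"] Y_part_X_comb[of "{1..s}" F] by (simp add: Y_part_diff)
  then show ?thesis
    using one_notin_local_ring[OF assms] by (auto simp: Y_coeffs_in_def)
qed

context reduction_setting
begin

text \<open>A unit Y-coefficient in degree k would give y^k \<in> J I^(k-1), hence r < k.\<close>
lemma Qdeg_Y_coeff_not_unit:
  assumes H: "H \<in> Qdeg x y s (Suc k)" and k: "Suc k \<le> r"
  shows "d * Poly_Mapping.lookup H (Poly_Mapping.single 0 (Suc k)) \<noteq> 1"
proof
  define c where "c = Poly_Mapping.lookup H (Poly_Mapping.single 0 (Suc k))"
  assume d: "d * c = 1"
  have H_Vdeg: "H \<in> Vdeg s (Suc k)" using H by (simp add: Qdeg_iff)
  obtain B where B: "\<forall>l\<in>{1..s}. B l \<in> Vdeg s (Suc k - 1)"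
    and H_eq: "H = Poly_Mapping.single 0 c * Yv ^ Suc k + (\<Sum>l\<in>{1..s}. var l * B l)"
    unfolding c_def by (rule Vdeg_decompose[OF H_Vdeg])
  have X: "rees_eval x y (\<Sum>l\<in>{1..s}. var l * B l) = (\<Sum>l\<in>{1..s}. x l * rees_eval x y (B l))"
    by (simp add: rees_eval_X_comb)
  have "0 = rees_eval x y H" using H by (simp add: Qdeg_iff)
  also have "\<dots> = c * y ^ Suc k + (\<Sum>l\<in>{1..s}. x l * rees_eval x y (B l))"
    unfolding H_eq by (simp only: rees_eval_add rees_eval_const_Yv_pow X)
  finally have "c * y ^ Suc k = - (\<Sum>l\<in>{1..s}. x l * rees_eval x y (B l))"
    by (simp add: eq_neg_iff_add_eq_0)
  then have "y ^ Suc k = d * - (\<Sum>l\<in>{1..s}. x l * rees_eval x y (B l))"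
    using d by (metis mult.assoc mult_1)
  also have "\<dots> \<in> lin_comb x {1..s} (ideal_pow I k)"
  proof -
    have "(\<Sum>l\<in>{1..s}. x l * rees_eval x y (B l)) \<in> lin_comb x {1..s} (ideal_pow I k)"
      by (rule lin_comb_mem) (use B rees_eval_mem_ideal_pow in auto)
    then have "- (\<Sum>l\<in>{1..s}. x l * rees_eval x y (B l)) \<in> lin_comb x {1..s} (ideal_pow I k)"
      by (rule ideal_uminus[OF ideal_lin_comb[OF ideal_ideal_pow]])
    then show ?thesis
      by (rule ideal_mult_left[OF ideal_lin_comb[OF ideal_ideal_pow]])
  qed
  finally have "r \<le> k" by (intro red_num_le ideal_pow_Suc_eq_J_mult_if_y_power)
  with k show False by simp
qed

lemma Qdeg_subset_Y_coeffs_in: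
  assumes loc: "local_ring m" and k: "k \<le> r"
  shows "Qdeg x y s k \<subseteq> Y_coeffs_in s m"
proof
  fix H assume HQ: "H \<in> Qdeg x y s k"
  then have H: "H \<in> Vdeg s k" "rees_eval x y H = 0" by (auto simp: Qdeg_iff)
  have m: "ideal m" using loc by (simp add: local_ring_def)
  show "H \<in> Y_coeffs_in s m"
  proof (cases k)
    case 0
    then have "H = 0" using Vdeg_0_eq_const[of H s] H by (metis rees_eval_const single_zero)
    then show ?thesis using ideal_in_0[OF m] by (simp add: Y_coeffs_in_def Y_part_def)
  next
    case (Suc k')
    define c where "c = Poly_Mapping.lookup H (Poly_Mapping.single 0 k)"
    obtain B where H_eq: "H = Poly_Mapping.single 0 c * Yv ^ k + (\<Sum>l\<in>{1..s}. var l * B l)"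
      unfolding c_def by (rule Vdeg_decompose[OF H(1)])
    have "c \<in> m"
      using Qdeg_Y_coeff_not_unit[of H k'] HQ k Suc unit_if_notin_local_ring[OF loc]
      unfolding c_def by metis
    moreover have "Y_part H = monom c k"
      unfolding H_eq by (simp add: Y_part_add Y_part_const_Yv_pow Y_part_X_comb)
    ultimately show ?thesis
      using H(1) Vdeg_Vset ideal_in_0[OF m] by (auto simp: Y_coeffs_in_def coeff_monom)
  qed
qed

lemma rt_eq_Suc_red_num:
  fixes m :: "'a set"
  assumes loc: "local_ring m" and Q: "Qker x y s = Qupto x y s (r + 1)"
  shows "rt x y s = r + 1"
  unfolding rt_def
proof (rule Least_equality)
  show "1 \<le> r + 1 \<and> Qker x y s = Qupto x y s (r + 1)" using Q by simp
next
  fix N assume N: "1 \<le> N \<and> Qker x y s = Qupto x y s N"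
  obtain Fs where "Yv ^ (r + 1) - (\<Sum>i=1..s. Xv i * Fs i) \<in> Qdeg x y s (r + 1)"
    by (rule reduction_form_exists)
  then have G: "Yv ^ (r + 1) - (\<Sum>i=1..s. Xv i * Fs i) \<in> Qupto x y s N"
    using N by (simp add: Qdeg_def)
  show "r + 1 \<le> N"
  proof (rule ccontr)
    assume "\<not> r + 1 \<le> N"
    moreover have "ideal m" using loc by (simp add: local_ring_def)
    ultimately have "Qupto x y s N \<subseteq> Y_coeffs_in s m"
      unfolding Qupto_def
      by (intro gen_in_least[OF ideal_Y_coeffs_in] UN_least Qdeg_subset_Y_coeffs_in[OF loc]) auto
    then show False using G reduction_form_notin_Y_coeffs_in[OF loc] by blast
  qed
qed

section \<open>The presentation of Q under (c) and (d)\<close>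

lemma colon_condition_R_sequence:
  assumes rs: "R_sequence x s"
    and d: "\<forall>i\<in>{1..s-1}. Jseq x i \<inter> ideal_pow I r = ideal_mult (Jseq x i) (ideal_pow I (r - 1))"
  shows "colon_condition (r + 1)"
  unfolding colon_condition_def
proof (intro ballI impI)
  fix k a assume k: "k \<in> {1..s}" and a: "a \<in> ideal_pow I (r + 1 - 1)" and xa: "x k * a \<in> Jseq x (k - 1)"
  have aJ: "a \<in> Jseq x (k - 1)"
    using rs k xa unfolding R_sequence_def by (simp add: mult.commute)
  show "a \<in> ideal_mult (Jseq x (k - 1)) (ideal_pow I (r + 1 - 2))"
  proof (cases "k = 1")
    case True
    then show ?thesis using aJ ideal_in_0[OF ideal_mult_ideal] by (simp add: Jseq_0)
  next
    case False
    then have "k - 1 \<in> {1..s-1}" using k by auto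
    then show ?thesis using d aJ a by auto
  qed
qed

lemma Qker_eq_gen_reduction_form:
  assumes mu: "mu I = s + 1" and Q: "Qker x y s = Qupto x y s (r + 1)"
    and rs: "R_sequence x s"
    and d: "\<forall>i\<in>{1..s-1}. Jseq x i \<inter> ideal_pow I r = ideal_mult (Jseq x i) (ideal_pow I (r - 1))"
  shows "\<exists>F. (\<forall>i\<in>{1..s}. F i \<in> Vdeg s r)
    \<and> Yv ^ (r + 1) - (\<Sum>i=1..s. Xv i * F i) \<in> Qdeg x y s (r + 1)
    \<and> Qker x y s = gen_in (Vset s) (insert (Yv ^ (r + 1) - (\<Sum>i=1..s. Xv i * F i)) (Qupto x y s r))"
proof -
  obtain Fs where Fs: "\<forall>i\<in>{1..s}. Fs i \<in> Vdeg s r"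
    and G: "Yv ^ (r + 1) - (\<Sum>i=1..s. Xv i * Fs i) \<in> Qdeg x y s (r + 1)"
    by (rule reduction_form_exists)
  let ?G = "Yv ^ (r + 1) - (\<Sum>i=1..s. Xv i * Fs i)"
  define T where "T = gen_in (Vset s) (insert ?G (Qupto x y s r))"
  have T: "ideal_in (Vset s) T"
    unfolding T_def using G Vdeg_Vset ideal_in_subset[OF ideal_Qupto, of x y s r]
    by (intro ideal_in_gen_in[OF is_subring_Vset]) (auto simp: Qdeg_iff)
  have GT: "?G \<in> T" and QT: "Qupto x y s r \<subseteq> T"
    unfolding T_def using gen_in_subset by blast+
  have "Qdeg x y s (r + 1) \<subseteq> T"
  proof (rule Qdeg_subset_by_reduction_form[OF _ _ colon_condition_R_sequence[OF rs d] T _ Fs])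
    show "Qdeg x y s (r + 1 - 1) \<subseteq> T" using subset_trans[OF Qdeg_subset_Qupto[OF order_refl] QT] by simp
  qed (use red_num_pos[OF mu] G GT in auto)
  then have "Qker x y s \<subseteq> T"
    using Q Qupto_Suc_subset[OF T QT] by simp
  moreover have "T \<subseteq> Qker x y s"
    unfolding T_def using G Qupto_subset_Qker[of x y s r]
    by (intro gen_in_least[OF ideal_Qker]) (auto simp: Qdeg_def)
  ultimately show ?thesis using Fs G unfolding T_def by blast
qed

end

theorem mainTheorem4:
  fixes m I :: "'a::comm_ring_1 set" and x :: "nat \<Rightarrow> 'a" and y :: 'a and s r :: nat
  assumes noeth: "noetherian_ring TYPE('a)"
    and local: "local_ring m"
    and I_gen: "I = gen (insert y (x ` {1..s}))"
    and minimal: "mu I = s + 1"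
    and red: "is_reduction (Jseq x s) I"
    and r_def: "r = red_num (Jseq x s) I"
    and a: "d_sequence x s"
    and b: "\<forall>i\<in>{1..s-1}. Jseq x i \<inter> ideal_pow I (r + 1) = ideal_mult (Jseq x i) (ideal_pow I r)"
  shows "rt x y s \<le> r + 1
    \<and> (R_sequence x s
        \<and> (\<forall>i\<in>{1..s-1}. Jseq x i \<inter> ideal_pow I r = ideal_mult (Jseq x i) (ideal_pow I (r - 1)))
       \<longrightarrow> rt x y s = r + 1
         \<and> (\<exists>F :: nat \<Rightarrow> 'a mpoly. (\<forall>i\<in>{1..s}. F i \<in> Vdeg s r)
              \<and> Yv ^ (r + 1) - (\<Sum>i=1..s. Xv i * F i) \<in> Qdeg x y s (r + 1)
              \<and> Qker x y s = gen_in (Vset s) (insert (Yv ^ (r + 1) - (\<Sum>i=1..s. Xv i * F i)) (Qupto x y s r))))"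
proof -
  interpret reduction_setting x y s I r
    using I_gen red r_def by unfold_locales
  have Q: "Qker x y s = Qupto x y s (r + 1)"
    by (rule Qker_eq_Qupto_Suc_red_num[OF a b])
  have "rt x y s = r + 1"
    by (rule rt_eq_Suc_red_num[OF local Q])
  with Qker_eq_gen_reduction_form[OF minimal Q] show ?thesis
    by simp
qed

end
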